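(* Let $W$ be a right-angled Coxeter group with simple generators $S$, and let $x_1,x_2,y_1,y_2\in W$ form a butterfly. Then there exist $m\ge1$, $u,v\in W$, and non-commuting $s,s'\in S$ such that $x_1=u\cdot A^{(m)}(s,s')\cdot v$, $x_2=u\cdot A^{(m)}(s',s)\cdot v$, and $\{y_1,y_2\}=\{u\cdot A^{(m+1)}(s,s')\cdot v,\ u\cdot A^{(m+1)}(s',s)\cdot v\}$, where each of these four products is length-additive.
   Context: $W$ is right-angled: every two distinct simple generators either commute or generate an infinite dihedral group (no relation). $\ell$ is length, $\le$ Bruhat order, $\lessdot$ its covers. Elements $x_1,x_2,y_1,y_2$ with $x_1\ne x_2$, $y_1\ne y_2$ form a butterfly if $x_a\lessdot y_b$ for all $a,b\in\{1,2\}$. For non-commuting $s,s'\in S$, $A^{(m)}(s,s')=ss'ss'\cdots$ is the alternating product of $m$ factors beginning with $s$. A product $u\cdot a\cdot v$ is length-additive if $\ell(uav)=\ell(u)+\ell(a)+\ell(v)$. *)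

theory Defs
  imports Main "HOL-Library.Sublist"
begin

text \<open>A right-angled Coxeter system is given by a set S of generators and a
commutation relation C on S (symmetric, irreflexive): distinct s, t in S commute
iff C s t, otherwise they generate an infinite dihedral group.  W is the group
presented by generators S and relations s s = 1 (s in S) and s t = t s (C s t).
Elements of W are represented by words over S (lists), modulo the congruence
generated by these relations; group multiplication is concatenation.\<close>

definition right_angled :: "'a set \<Rightarrow> ('a \<Rightarrow> 'a \<Rightarrow> bool) \<Rightarrow> bool" where
  "right_angled S C \<longleftrightarrow> (\<forall>s t. C s t \<longrightarrow> s \<in> S \<and> t \<in> S \<and> C t s \<and> s \<noteq> t)"

definition words :: "'a set \<Rightarrow> 'a list set" where
  "words S = {w. set w \<subseteq> S}"

inductive word_step :: "'a set \<Rightarrow> ('a \<Rightarrow> 'a \<Rightarrow> bool) \<Rightarrow> 'a list \<Rightarrow> 'a list \<Rightarrow> bool"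
  for S C where
  cancel: "s \<in> S \<Longrightarrow> word_step S C (xs @ [s, s] @ ys) (xs @ ys)"
| swap: "C s t \<Longrightarrow> word_step S C (xs @ [s, t] @ ys) (xs @ [t, s] @ ys)"

definition eqW :: "'a set \<Rightarrow> ('a \<Rightarrow> 'a \<Rightarrow> bool) \<Rightarrow> 'a list \<Rightarrow> 'a list \<Rightarrow> bool" where
  "eqW S C = equivclp (word_step S C)"

definition len :: "'a set \<Rightarrow> ('a \<Rightarrow> 'a \<Rightarrow> bool) \<Rightarrow> 'a list \<Rightarrow> nat" where
  "len S C w = (LEAST n. \<exists>w'. eqW S C w' w \<and> length w' = n)"

definition bruhat_le :: "'a set \<Rightarrow> ('a \<Rightarrow> 'a \<Rightarrow> bool) \<Rightarrow> 'a list \<Rightarrow> 'a list \<Rightarrow> bool" where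
  "bruhat_le S C u w \<longleftrightarrow> (\<exists>w' u'. eqW S C w' w \<and> length w' = len S C w \<and>
      subseq u' w' \<and> eqW S C u' u)"

definition bruhat_lt :: "'a set \<Rightarrow> ('a \<Rightarrow> 'a \<Rightarrow> bool) \<Rightarrow> 'a list \<Rightarrow> 'a list \<Rightarrow> bool" where
  "bruhat_lt S C u w \<longleftrightarrow> bruhat_le S C u w \<and> \<not> eqW S C u w"

definition bruhat_cover :: "'a set \<Rightarrow> ('a \<Rightarrow> 'a \<Rightarrow> bool) \<Rightarrow> 'a list \<Rightarrow> 'a list \<Rightarrow> bool" where
  "bruhat_cover S C u w \<longleftrightarrow> bruhat_lt S C u w \<and>
      \<not> (\<exists>z \<in> words S. bruhat_lt S C u z \<and> bruhat_lt S C z w)"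

definition butterfly :: "'a set \<Rightarrow> ('a \<Rightarrow> 'a \<Rightarrow> bool) \<Rightarrow> 'a list \<Rightarrow> 'a list \<Rightarrow> 'a list \<Rightarrow> 'a list \<Rightarrow> bool" where
  "butterfly S C x1 x2 y1 y2 \<longleftrightarrow> \<not> eqW S C x1 x2 \<and> \<not> eqW S C y1 y2 \<and>
     bruhat_cover S C x1 y1 \<and> bruhat_cover S C x1 y2 \<and>
     bruhat_cover S C x2 y1 \<and> bruhat_cover S C x2 y2"

definition alt :: "nat \<Rightarrow> 'a \<Rightarrow> 'a \<Rightarrow> 'a list" where
  "alt m s s' = map (\<lambda>i. if even i then s else s') [0..<m]"

definition len_additive :: "'a set \<Rightarrow> ('a \<Rightarrow> 'a \<Rightarrow> bool) \<Rightarrow> 'a list \<Rightarrow> 'a list \<Rightarrow> 'a list \<Rightarrow> bool" where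
  "len_additive S C u a v \<longleftrightarrow> len S C (u @ a @ v) = len S C u + len S C a + len S C v"

end

theory Submission
  imports Defs "HOL-Library.Multiset"
begin

text \<open>In a right-angled Coxeter group the reduced words of an element are exactly the words
obtained from one of them by swapping adjacent commuting letters, and left multiplication of a
reduced word by a generator s either deletes an occurrence of s that commutes to the front or
prepends s.  This makes left descents and the subword description of Bruhat order completely
explicit.  A butterfly is then analysed by induction on the length of y1.  A common left descent
r of y1 and y2 is also a left descent of x1 and x2 and can be cancelled from all four elements.
Otherwise y1 and y2 have left descents s and t that do not commute, and x2 = s y1, x1 = t y2.
Writing x1 = s X1 and x2 = t X2, either X1 = X2 (the case m = 1) or (X2, X1, x1, x2) is a
smaller butterfly whose alternating words, extended by one letter, give the claim.\<close>

section \<open>Words modulo the Coxeter relations\<close>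

lemma eqW_refl [simp]: "eqW S C w w"
  by (simp add: eqW_def)

lemma eqW_sym: "eqW S C a b \<Longrightarrow> eqW S C b a"
  unfolding eqW_def by (rule equivclp_sym)

lemma eqW_trans [trans]: "eqW S C a b \<Longrightarrow> eqW S C b c \<Longrightarrow> eqW S C a c"
  unfolding eqW_def by (rule equivclp_trans)

lemma eqW_if_word_step: "word_step S C a b \<Longrightarrow> eqW S C a b"
  unfolding eqW_def by (rule r_into_equivclp)

lemma word_step_append_context: "word_step S C a b \<Longrightarrow> word_step S C (x @ a @ y) (x @ b @ y)"
proof (induction rule: word_step.induct)
  case (cancel s xs ys)
  then show ?case using word_step.cancel[where xs="x @ xs" and ys="ys @ y"] by simp
next
  case (swap s t xs ys)
  then show ?case using word_step.swap[where xs="x @ xs" and ys="ys @ y"] by simp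
qed

lemma eqW_append_context: "eqW S C a b \<Longrightarrow> eqW S C (x @ a @ y) (x @ b @ y)"
  unfolding eqW_def
proof (induction rule: equivclp_induct)
  case base
  then show ?case by simp
next
  case (step b c)
  then show ?case by (meson equivclp_into_equivclp word_step_append_context)
qed

lemma eqW_Cons: "eqW S C a b \<Longrightarrow> eqW S C (x # a) (x # b)"
  using eqW_append_context[of S C a b "[x]" "[]"] by simp

lemma eqW_append_left: "eqW S C a b \<Longrightarrow> eqW S C (x @ a) (x @ b)"
  using eqW_append_context[of S C a b x "[]"] by simp

lemma eqW_append_right: "eqW S C a b \<Longrightarrow> eqW S C (a @ y) (b @ y)"
  using eqW_append_context[of S C a b "[]" y] by simp

lemma eqW_append: "eqW S C a b \<Longrightarrow> eqW S C c d \<Longrightarrow> eqW S C (a @ c) (b @ d)"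
  by (meson eqW_append_left eqW_append_right eqW_trans)

lemma eqW_Cons_Cons_cancel: "s \<in> S \<Longrightarrow> eqW S C (s # s # w) w"
  using word_step.cancel[where xs="[]" and ys=w] eqW_if_word_step by fastforce

lemma eqW_Cons_iff_eqW_Cons:
  assumes s: "s \<in> S"
  shows "eqW S C (s # a) b \<longleftrightarrow> eqW S C a (s # b)"
proof
  assume "eqW S C (s # a) b"
  then have "eqW S C (s # s # a) (s # b)" by (rule eqW_Cons)
  then show "eqW S C a (s # b)" using eqW_trans[OF eqW_sym[OF eqW_Cons_Cons_cancel[OF s]]] by blast
next
  assume "eqW S C a (s # b)"
  then have "eqW S C (s # a) (s # s # b)" by (rule eqW_Cons)
  then show "eqW S C (s # a) b" using eqW_trans[OF _ eqW_Cons_Cons_cancel[OF s]] by blast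
qed

lemma word_step_set_subset: "word_step S C a b \<Longrightarrow> set a \<subseteq> S \<longleftrightarrow> set b \<subseteq> S"
  by (induction rule: word_step.induct) auto

lemma eqW_set_subset: "eqW S C a b \<Longrightarrow> set a \<subseteq> S \<Longrightarrow> set b \<subseteq> S"
  unfolding eqW_def
proof (induction rule: equivclp_induct)
  case base
  then show ?case by simp
next
  case (step b c)
  then show ?case using word_step_set_subset by metis
qed

lemma eqW_rev_append_self: "set a \<subseteq> S \<Longrightarrow> eqW S C (rev a @ a) []"
proof (induction a)
  case Nil
  then show ?case by simp
next
  case (Cons x a)
  have "eqW S C (rev a @ [x, x] @ a) (rev a @ a)"
    using eqW_append_context[OF eqW_Cons_Cons_cancel[of x S C "[]"]] Cons.prems by simp
  then show ?case using Cons eqW_trans by fastforce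
qed

lemma eqW_cancel_left: "set a \<subseteq> S \<Longrightarrow> eqW S C (a @ x) (a @ y) \<Longrightarrow> eqW S C x y"
proof -
  assume a: "set a \<subseteq> S" and e: "eqW S C (a @ x) (a @ y)"
  have "eqW S C (rev a @ a @ x) (rev a @ a @ y)" using eqW_append_left e by blast
  moreover have "eqW S C (rev a @ a @ z) z" for z
    using eqW_append_right[OF eqW_rev_append_self[OF a], where y=z] by simp
  ultimately show ?thesis by (meson eqW_sym eqW_trans)
qed

lemma eqW_cancel_right: "set a \<subseteq> S \<Longrightarrow> eqW S C (x @ a) (y @ a) \<Longrightarrow> eqW S C x y"
proof -
  assume a: "set a \<subseteq> S" and e: "eqW S C (x @ a) (y @ a)"
  have "eqW S C (x @ a @ rev a) (y @ a @ rev a)" using eqW_append_right[OF e, of "rev a"] by simp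
  moreover have "eqW S C (z @ a @ rev a) z" for z
    using eqW_append_left[OF eqW_rev_append_self[of "rev a"], where x=z] a by simp
  ultimately show ?thesis by (meson eqW_sym eqW_trans)
qed

lemma len_le: "eqW S C w' w \<Longrightarrow> len S C w \<le> length w'"
  unfolding len_def by (rule Least_le) blast

lemma len_witness: "\<exists>w'. eqW S C w' w \<and> length w' = len S C w"
  unfolding len_def by (rule LeastI_ex) (use eqW_refl in blast)

lemma len_le_length: "len S C w \<le> length w"
  using len_le[of S C w w] by simp

lemma len_Nil [simp]: "len S C [] = 0"
  using len_le_length[of S C "[]"] by simp

lemma len_eqW: "eqW S C a b \<Longrightarrow> len S C a = len S C b"
proof -
  assume ab: "eqW S C a b"
  obtain a' where a': "eqW S C a' a" "length a' = len S C a" using len_witness by blast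
  obtain b' where b': "eqW S C b' b" "length b' = len S C b" using len_witness by blast
  have "len S C b \<le> length a'" using a' ab by (meson eqW_trans len_le)
  moreover have "len S C a \<le> length b'" using b' ab by (meson eqW_sym eqW_trans len_le)
  ultimately show ?thesis using a' b' by simp
qed

lemma len_append_le: "len S C (a @ b) \<le> len S C a + len S C b"
proof -
  obtain a' where a': "eqW S C a' a" "length a' = len S C a" using len_witness by blast
  obtain b' where b': "eqW S C b' b" "length b' = len S C b" using len_witness by blast
  have "eqW S C (a' @ b') (a @ b)" using a' b' eqW_append by blast
  then show ?thesis using len_le a' b' by fastforce
qed

lemma len_Cons_le: "len S C (s # w) \<le> Suc (len S C w)"
  using len_append_le[of S C "[s]" w] len_le_length[of S C "[s]"] by simp

section \<open>Commutation classes of words\<close>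

definition comm_step :: "('a \<Rightarrow> 'a \<Rightarrow> bool) \<Rightarrow> 'a list \<Rightarrow> 'a list \<Rightarrow> bool" where
  "comm_step C u w \<longleftrightarrow> (\<exists>xs ys s t. C s t \<and> u = xs @ [s, t] @ ys \<and> w = xs @ [t, s] @ ys)"

abbreviation comm_equiv :: "('a \<Rightarrow> 'a \<Rightarrow> bool) \<Rightarrow> 'a list \<Rightarrow> 'a list \<Rightarrow> bool" where
  "comm_equiv C \<equiv> (comm_step C)\<^sup>*\<^sup>*"

lemma comm_step_Cons_Cons: "C s t \<Longrightarrow> comm_step C (s # t # w) (t # s # w)"
  unfolding comm_step_def by (metis append_Cons append_Nil)

lemma comm_equiv_Cons_Cons: "C s t \<Longrightarrow> comm_equiv C (s # t # w) (t # s # w)"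
  by (rule r_into_rtranclp) (rule comm_step_Cons_Cons)

lemma comm_step_eqW: "comm_step C a b \<Longrightarrow> eqW S C a b"
  unfolding comm_step_def using word_step.swap eqW_if_word_step by fastforce

lemma comm_equiv_eqW: "comm_equiv C a b \<Longrightarrow> eqW S C a b"
  by (induction rule: rtranclp_induct) (auto intro: eqW_trans comm_step_eqW)

lemma comm_step_append_context: "comm_step C a b \<Longrightarrow> comm_step C (x @ a @ y) (x @ b @ y)"
  unfolding comm_step_def by (metis append.assoc)

lemma comm_equiv_append_context: "comm_equiv C a b \<Longrightarrow> comm_equiv C (x @ a @ y) (x @ b @ y)"
proof (induction rule: rtranclp_induct)
  case base
  then show ?case by simp
next
  case (step b c)
  then show ?case by (meson rtranclp.simps comm_step_append_context)
qed

lemma comm_equiv_Cons: "comm_equiv C a b \<Longrightarrow> comm_equiv C (x # a) (x # b)"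
  using comm_equiv_append_context[of C a b "[x]" "[]"] by simp

lemma comm_equiv_mset: "comm_equiv C a b \<Longrightarrow> mset a = mset b"
  by (induction rule: rtranclp_induct) (auto simp: comm_step_def)

lemma comm_equiv_length: "comm_equiv C a b \<Longrightarrow> length a = length b"
  by (metis comm_equiv_mset size_mset)

lemma comm_equiv_set: "comm_equiv C a b \<Longrightarrow> set a = set b"
  by (metis comm_equiv_mset set_mset_mset)

text \<open>If all letters of w before its leftmost s commute with s, then s w equals, in W, the word
obtained by deleting that s; \<open>pull_out\<close> performs the deletion, and \<open>lmult C s w\<close> is a reduced
word for s w whenever w is reduced.\<close>

fun pull_out :: "('a \<Rightarrow> 'a \<Rightarrow> bool) \<Rightarrow> 'a \<Rightarrow> 'a list \<Rightarrow> 'a list option" where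
  "pull_out C s [] = None"
| "pull_out C s (x # xs) =
    (if x = s then Some xs else if C x s then map_option (Cons x) (pull_out C s xs) else None)"

definition lmult :: "('a \<Rightarrow> 'a \<Rightarrow> bool) \<Rightarrow> 'a \<Rightarrow> 'a list \<Rightarrow> 'a list" where
  "lmult C s w = (case pull_out C s w of None \<Rightarrow> s # w | Some r \<Rightarrow> r)"

fun reduce :: "('a \<Rightarrow> 'a \<Rightarrow> bool) \<Rightarrow> 'a list \<Rightarrow> 'a list" where
  "reduce C [] = []"
| "reduce C (a # w) = lmult C a (reduce C w)"

fun reduced :: "('a \<Rightarrow> 'a \<Rightarrow> bool) \<Rightarrow> 'a list \<Rightarrow> bool" where
  "reduced C [] = True"
| "reduced C (a # w) = (reduced C w \<and> pull_out C a w = None)"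

lemma pull_out_length: "pull_out C s w = Some r \<Longrightarrow> length w = Suc (length r)"
  by (induction w arbitrary: r) (auto split: if_splits)

lemma pull_out_subseq: "pull_out C s w = Some r \<Longrightarrow> subseq r w"
  by (induction w arbitrary: r) (auto split: if_splits)

lemma pull_out_append_commuting:
  "\<forall>x\<in>set P. C x s \<and> x \<noteq> s \<Longrightarrow> pull_out C s (P @ Q) = map_option ((@) P) (pull_out C s Q)"
proof (induction P)
  case Nil
  have "(@) [] = (\<lambda>x::'a list. x)" by auto
  then show ?case by (simp add: option.map_ident)
next
  case (Cons a P)
  then show ?case by (auto simp: option.map_comp comp_def)
qed

lemma pull_out_SomeD:
  "pull_out C s w = Some r \<Longrightarrow> \<exists>p q. w = p @ s # q \<and> (\<forall>x\<in>set p. C x s) \<and> r = p @ q"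
proof (induction w arbitrary: r)
  case Nil
  then show ?case by simp
next
  case (Cons x w)
  show ?case
  proof (cases "x = s")
    case True
    then show ?thesis using Cons by force
  next
    case False
    with Cons.prems obtain r' where "C x s" "pull_out C s w = Some r'" "r = x # r'"
      by (auto split: if_splits)
    with Cons.IH[of r'] show ?thesis by (metis Cons_eq_appendI set_ConsD)
  qed
qed

lemma pull_out_append_not_in:
  "pull_out C s (A @ V) \<noteq> None \<Longrightarrow> s \<notin> set A \<Longrightarrow> (\<forall>a\<in>set A. C a s) \<and> pull_out C s V \<noteq> None"
  by (induction A) (auto split: if_splits)

lemma length_lmult:
  "length (lmult C s w) = (if pull_out C s w = None then Suc (length w) else length w - 1)"
  unfolding lmult_def by (auto split: option.splits dest: pull_out_length)

lemma length_reduce_le: "length (reduce C w) \<le> length w"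
  by (induction w) (auto simp: length_lmult)

lemma set_reduce: "set (reduce C w) \<subseteq> set w"
proof (induction w)
  case (Cons a w)
  have "set (lmult C a v) \<subseteq> insert a (set v)" for v
    unfolding lmult_def
    by (auto split: option.splits dest!: pull_out_subseq dest: list_emb_set)
  then show ?case using Cons by fastforce
qed simp

lemma reduce_append: "reduce C (xs @ ys) = foldr (lmult C) xs (reduce C ys)"
  by (induction xs) auto

lemma reduced_appendD: "reduced C (A @ B) \<Longrightarrow> reduced C B"
  by (induction A) auto

lemma alt_Suc: "alt (Suc m) s t = s # alt m t s"
  unfolding alt_def by (simp add: upt_conv_Cons map_Suc_upt[symmetric] del: upt_Suc)

lemma alt_0 [simp]: "alt 0 s t = []"
  by (simp add: alt_def)

lemma reduced_alt: "\<not> C s t \<Longrightarrow> \<not> C t s \<Longrightarrow> s \<noteq> t \<Longrightarrow> reduced C (alt m s t)"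
proof (induction m arbitrary: s t)
  case (Suc m)
  then have "pull_out C s (alt m t s) = None" by (cases m) (auto simp: alt_Suc)
  moreover have "reduced C (alt m t s)" using Suc by auto
  ultimately show ?case by (simp add: alt_Suc)
qed simp

lemma length_alt [simp]: "length (alt m s t) = m"
  by (simp add: alt_def)

lemma set_alt_subset: "set (alt m s t) \<subseteq> {s, t}"
  unfolding alt_def by auto

lemma set_alt: "m \<ge> 2 \<Longrightarrow> set (alt m s t) = {s, t}"
proof -
  assume "m \<ge> 2"
  then obtain k where "m = Suc (Suc k)" by (metis add_2_eq_Suc le_Suc_ex)
  then show ?thesis using set_alt_subset[of k s t] by (auto simp: alt_Suc)
qed

definition remove_at :: "nat \<Rightarrow> 'a list \<Rightarrow> 'a list" where
  "remove_at p Y = take p Y @ drop (Suc p) Y"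

lemma remove_at_Cons_0 [simp]: "remove_at 0 (y # Y) = Y"
  by (simp add: remove_at_def)

lemma remove_at_Cons_Suc [simp]: "remove_at (Suc p) (y # Y) = y # remove_at p Y"
  by (simp add: remove_at_def)

lemma subseq_remove_at: "subseq (remove_at p Y) Y"
proof -
  have "subseq (drop 1 (drop p Y)) (drop p Y)" by (metis suffix_drop suffix_imp_subseq)
  then have "subseq (take p Y @ drop (Suc p) Y) (take p Y @ drop p Y)"
    by (simp only: subseq_append' drop_drop) simp
  then show ?thesis by (simp add: remove_at_def)
qed

lemma mset_remove_at: "p < length Y \<Longrightarrow> mset Y = add_mset (Y ! p) (mset (remove_at p Y))"
proof (induction Y arbitrary: p)
  case (Cons y Y)
  then show ?case by (cases p) auto
qed simp

lemma subseq_length_Suc_remove_at: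
  "subseq U Y \<Longrightarrow> Suc (length U) = length Y \<Longrightarrow> \<exists>p < length Y. U = remove_at p Y"
proof (induction Y arbitrary: U)
  case (Cons y Y)
  show ?case
  proof (cases "subseq U Y")
    case True
    then have "U = Y" using Cons.prems(2) by (simp add: subseq_same_length)
    then show ?thesis by (intro exI[of _ 0]) simp
  next
    case False
    then obtain U1 where "U = y # U1" "subseq U1 Y"
      using Cons.prems(1) by (cases U) (auto split: if_splits)
    with Cons.IH[of U1] Cons.prems(2) obtain p where "p < length Y" "U1 = remove_at p Y" by auto
    then show ?thesis using \<open>U = y # U1\<close> by (intro exI[of _ "Suc p"]) simp
  qed
qed simp

lemma pull_out_remove_at_unique:
  "pull_out C s Y = None \<Longrightarrow> p < length Y \<Longrightarrow> pull_out C s (remove_at p Y) \<noteq> None \<Longrightarrow>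
   q < length Y \<Longrightarrow> pull_out C s (remove_at q Y) \<noteq> None \<Longrightarrow> p = q \<and> \<not> C (Y ! p) s"
proof (induction Y arbitrary: p q)
  case (Cons y Y)
  have ys: "y \<noteq> s" using Cons.prems(1) by auto
  show ?case
  proof (cases "C y s")
    case True
    have dY: "pull_out C s Y = None" using Cons.prems(1) True ys by auto
    obtain p' q' where pq: "p = Suc p'" "q = Suc q'"
      using Cons.prems(3,5) dY by (cases p; cases q) auto
    have "pull_out C s (remove_at p' Y) \<noteq> None" "pull_out C s (remove_at q' Y) \<noteq> None"
      using Cons.prems(3,5) pq True ys by auto
    then show ?thesis using Cons.IH[OF dY, of p' q'] Cons.prems(2,4) pq by auto
  next
    case False
    then have "p = 0" "q = 0" using Cons.prems(3,5) ys by (cases p; cases q; auto)+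
    then show ?thesis using False by simp
  qed
qed simp

lemma subseq_set: "subseq U W \<Longrightarrow> set U \<subseteq> set W"
  by (induction rule: list_emb.induct) auto

section \<open>The word problem\<close>

locale right_angled_coxeter =
  fixes S :: "'a set" and C :: "'a \<Rightarrow> 'a \<Rightarrow> bool"
  assumes right_angled: "right_angled S C"
begin

lemma C_sym: "C a b \<Longrightarrow> C b a"
  using right_angled unfolding right_angled_def by blast

lemma C_irrefl: "C a b \<Longrightarrow> a \<noteq> b"
  using right_angled unfolding right_angled_def by blast

lemma comm_equiv_sym: "comm_equiv C a b \<Longrightarrow> comm_equiv C b a"
proof (induction rule: rtranclp_induct)
  case (step b c)
  have "comm_step C c b" using step.hyps(2) C_sym unfolding comm_step_def by blast
  then show ?case using step.IH by (meson converse_rtranclp_into_rtranclp)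
qed simp

lemma pull_out_commuting_prefix:
  "\<forall>x\<in>set P. C x s \<Longrightarrow> pull_out C s (P @ Q) = map_option ((@) P) (pull_out C s Q)"
  by (rule pull_out_append_commuting) (use C_irrefl in blast)

lemma pull_out_Some_iff:
  "pull_out C s w = Some r \<longleftrightarrow> (\<exists>p q. w = p @ s # q \<and> (\<forall>x\<in>set p. C x s) \<and> r = p @ q)"
proof
  assume "\<exists>p q. w = p @ s # q \<and> (\<forall>x\<in>set p. C x s) \<and> r = p @ q"
  then obtain p q where "w = p @ s # q" "\<forall>x\<in>set p. C x s" "r = p @ q" by blast
  then show "pull_out C s w = Some r" by (simp add: pull_out_commuting_prefix)
qed (rule pull_out_SomeD)

lemma comm_equiv_move_to_front: "\<forall>x\<in>set P. C x s \<Longrightarrow> comm_equiv C (s # P @ Q) (P @ s # Q)"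
proof (induction P)
  case (Cons a P)
  then have "comm_equiv C (s # a # P @ Q) (a # s # P @ Q)"
    using comm_equiv_Cons_Cons[of C s a] C_sym by simp
  also have "comm_equiv C \<dots> (a # P @ s # Q)" using Cons by (simp add: comm_equiv_Cons)
  finally show ?case by simp
qed simp

lemma pull_out_None_delete:
  "C t x \<Longrightarrow> pull_out C x (A @ t # B) = None \<Longrightarrow> pull_out C x (A @ B) = None"
  by (induction A) (use C_irrefl in \<open>auto split: if_splits\<close>)

lemma reduced_delete: "reduced C (P @ s # Q) \<Longrightarrow> \<forall>x\<in>set P. C x s \<Longrightarrow> reduced C (P @ Q)"
proof (induction P)
  case (Cons a P)
  then show ?case using pull_out_None_delete[of s a P Q] C_sym[of a s] by auto
qed simp

lemma reduced_lmult: "reduced C w \<Longrightarrow> reduced C (lmult C s w)"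
  unfolding lmult_def
  by (auto split: option.splits simp: pull_out_Some_iff intro: reduced_delete)

lemma reduced_reduce: "reduced C (reduce C w)"
  by (induction w) (auto intro: reduced_lmult)

lemma lmult_lmult: "reduced C w \<Longrightarrow> comm_equiv C (lmult C s (lmult C s w)) w"
proof (cases "pull_out C s w")
  case None
  then show ?thesis by (simp add: lmult_def)
next
  case (Some r)
  assume "reduced C w"
  from Some obtain P Q where w: "w = P @ s # Q" and P: "\<forall>x\<in>set P. C x s" and r: "r = P @ Q"
    by (auto simp: pull_out_Some_iff)
  have "pull_out C s Q = None" using \<open>reduced C w\<close> w reduced_appendD by fastforce
  then have "pull_out C s (P @ Q) = None" using pull_out_commuting_prefix[OF P] by simp
  then have "lmult C s (lmult C s w) = s # P @ Q" using Some r by (simp add: lmult_def)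
  then show ?thesis using comm_equiv_move_to_front[OF P] w by simp
qed

lemma pull_out_both:
  "pull_out C t w = Some r1 \<Longrightarrow> pull_out C s w = Some r2 \<Longrightarrow> C s t \<Longrightarrow>
   \<exists>r. pull_out C s r1 = Some r \<and> pull_out C t r2 = Some r"
proof (induction w arbitrary: r1 r2)
  case (Cons x w)
  show ?case
  proof (cases "x = t \<or> x = s")
    case True
    then show ?thesis using Cons.prems C_sym C_irrefl by (auto split: if_splits)
  next
    case False
    from Cons.prems False obtain r1' r2' where
      "C x t" "C x s" "pull_out C t w = Some r1'" "pull_out C s w = Some r2'"
      "r1 = x # r1'" "r2 = x # r2'"
      by (auto split: if_splits)
    then show ?thesis using Cons.IH[of r1' r2'] Cons.prems False by auto
  qed
qed simp

lemma lmult_commute: "C s t \<Longrightarrow> comm_equiv C (lmult C s (lmult C t w)) (lmult C t (lmult C s w))"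
proof -
  assume st: "C s t"
  then have ts: "C t s" "s \<noteq> t" using C_sym C_irrefl by auto
  show ?thesis
  proof (cases "pull_out C t w")
    case Nt: None
    show ?thesis
    proof (cases "pull_out C s w")
      case None
      then show ?thesis using Nt ts st comm_equiv_Cons_Cons[of C s t] by (simp add: lmult_def)
    next
      case (Some r2)
      then obtain P Q where w: "w = P @ s # Q" and r: "r2 = P @ Q"
        by (auto simp: pull_out_Some_iff)
      have "pull_out C t (P @ Q) = None" using pull_out_None_delete[of s t P Q] Nt w st by simp
      then show ?thesis using Nt Some r ts st by (simp add: lmult_def)
    qed
  next
    case St: (Some r1)
    show ?thesis
    proof (cases "pull_out C s w")
      case None
      then obtain P Q where w: "w = P @ t # Q" and r: "r1 = P @ Q"
        using St by (auto simp: pull_out_Some_iff)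
      have "pull_out C s (P @ Q) = None" using pull_out_None_delete[of t s P Q] None w ts by simp
      then show ?thesis using None St r ts st by (simp add: lmult_def)
    next
      case (Some r2)
      then show ?thesis using pull_out_both[OF St Some st] St by (auto simp: lmult_def)
    qed
  qed
qed

lemma pull_out_comm_step:
  assumes "C a b"
  shows "(pull_out C s (xs @ [a, b] @ ys) = None \<longleftrightarrow> pull_out C s (xs @ [b, a] @ ys) = None) \<and>
    (\<forall>r. pull_out C s (xs @ [a, b] @ ys) = Some r \<longrightarrow>
      (\<exists>r'. pull_out C s (xs @ [b, a] @ ys) = Some r' \<and> comm_equiv C r r'))"
proof (induction xs)
  case Nil
  have ab: "a \<noteq> b" "C b a" using assms C_irrefl C_sym by auto
  have "comm_equiv C (a # b # r) (b # a # r)" for r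
    using comm_equiv_Cons_Cons[of C a b] assms by simp
  then show ?case using ab assms by (auto simp: option.map_comp comp_def)
next
  case (Cons x xs)
  have "comm_equiv C (xs @ a # b # ys) (xs @ b # a # ys)"
    using comm_equiv_append_context[OF comm_equiv_Cons_Cons[of C a b ys], of xs "[]"] assms by simp
  with Cons show ?case by (auto intro: comm_equiv_Cons)
qed

lemma lmult_comm_step: "comm_step C w w' \<Longrightarrow> comm_equiv C (lmult C s w) (lmult C s w')"
proof -
  assume step: "comm_step C w w'"
  then obtain xs ys a b where ab: "C a b" "w = xs @ [a, b] @ ys" "w' = xs @ [b, a] @ ys"
    unfolding comm_step_def by blast
  note p = pull_out_comm_step[OF ab(1), of s xs ys]
  show ?thesis
  proof (cases "pull_out C s w")
    case None
    then have "pull_out C s w' = None" using p ab by simp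
    then show ?thesis using None step by (simp add: lmult_def comm_equiv_Cons r_into_rtranclp)
  next
    case (Some r)
    then obtain r' where "pull_out C s w' = Some r'" "comm_equiv C r r'" using p ab by auto
    then show ?thesis using Some by (simp add: lmult_def)
  qed
qed

lemma lmult_comm_equiv: "comm_equiv C w w' \<Longrightarrow> comm_equiv C (lmult C s w) (lmult C s w')"
proof (induction rule: rtranclp_induct)
  case (step y z)
  then show ?case using lmult_comm_step by (meson rtranclp_trans)
qed simp

lemma foldr_lmult_comm_equiv:
  "comm_equiv C w w' \<Longrightarrow> comm_equiv C (foldr (lmult C) xs w) (foldr (lmult C) xs w')"
  by (induction xs) (auto intro: lmult_comm_equiv)

lemma reduce_word_step: "word_step S C w w' \<Longrightarrow> comm_equiv C (reduce C w) (reduce C w')"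
proof (induction rule: word_step.induct)
  case (cancel s xs ys)
  then show ?case
    using lmult_lmult[OF reduced_reduce] by (simp add: reduce_append foldr_lmult_comm_equiv)
next
  case (swap s t xs ys)
  then show ?case
    using lmult_commute[OF swap] by (simp add: reduce_append foldr_lmult_comm_equiv)
qed

lemma reduce_eqW: "eqW S C w w' \<Longrightarrow> comm_equiv C (reduce C w) (reduce C w')"
  unfolding eqW_def
proof (induction rule: equivclp_induct)
  case (step b c)
  then show ?case using reduce_word_step comm_equiv_sym by (meson rtranclp_trans)
qed simp

lemma reduce_reduced: "reduced C w \<Longrightarrow> comm_equiv C (reduce C w) w"
proof (induction w)
  case (Cons a w)
  then have "comm_equiv C (lmult C a (reduce C w)) (lmult C a w)" using lmult_comm_equiv by simp
  moreover have "lmult C a w = a # w" using Cons.prems by (simp add: lmult_def)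
  ultimately show ?case by simp
qed simp

lemma comm_equiv_if_reduced_eqW: "reduced C a \<Longrightarrow> reduced C b \<Longrightarrow> eqW S C a b \<Longrightarrow> comm_equiv C a b"
  by (meson comm_equiv_sym reduce_eqW reduce_reduced rtranclp_trans)

lemma len_reduced: "reduced C w \<Longrightarrow> len S C w = length w"
proof -
  assume w: "reduced C w"
  obtain w' where w': "eqW S C w' w" "length w' = len S C w" using len_witness by blast
  have "comm_equiv C (reduce C w') w" using reduce_eqW[OF w'(1)] reduce_reduced[OF w] by simp
  then have "length w = length (reduce C w')" using comm_equiv_length by metis
  also have "\<dots> \<le> length w'" by (rule length_reduce_le)
  finally show ?thesis using w' len_le_length[of S C w] by simp
qed

lemma lmult_eqW: "s \<in> S \<Longrightarrow> eqW S C (lmult C s w) (s # w)"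
proof (cases "pull_out C s w")
  case (Some r)
  assume s: "s \<in> S"
  from Some obtain P Q where w: "w = P @ s # Q" and P: "\<forall>x\<in>set P. C x s" and r: "r = P @ Q"
    using pull_out_Some_iff by blast
  have "eqW S C (s # w) (P @ s # s # Q)"
    using comm_equiv_move_to_front[OF P, of "s # Q"] w comm_equiv_eqW by simp
  also have "eqW S C (P @ s # s # Q) (P @ Q)"
    using eqW_Cons_Cons_cancel[OF s] eqW_append_left by blast
  finally show ?thesis using Some r by (simp add: lmult_def eqW_sym)
qed (simp add: lmult_def)

lemma eqW_reduce: "set w \<subseteq> S \<Longrightarrow> eqW S C (reduce C w) w"
proof (induction w)
  case (Cons a w)
  then have "eqW S C (lmult C a (reduce C w)) (a # reduce C w)" using lmult_eqW by simp
  also have "eqW S C (a # reduce C w) (a # w)" using Cons eqW_Cons by simp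
  finally show ?case by simp
qed simp

lemma len_eq_length_reduce: "set w \<subseteq> S \<Longrightarrow> len S C w = length (reduce C w)"
  using len_reduced[OF reduced_reduce] len_eqW eqW_reduce by metis

lemma reduced_if_len_eq_length: "set w \<subseteq> S \<Longrightarrow> len S C w = length w \<Longrightarrow> reduced C w"
proof (induction w)
  case (Cons a w)
  have "len S C (a # w) < length (a # w)" if nr: "\<not> reduced C (a # w)"
  proof (cases "reduced C w")
    case False
    then have "len S C w < length w" using Cons len_le_length[of S C w] by fastforce
    then obtain w' where "eqW S C w' w" "length w' < length w" using len_witness by metis
    then show ?thesis using len_le[OF eqW_Cons[of S C w' w a]] by fastforce
  next
    case True
    then obtain r where r: "pull_out C a w = Some r" using nr by auto
    then have "eqW S C r (a # w)" using lmult_eqW[of a w] Cons.prems by (simp add: lmult_def)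
    then show ?thesis using len_le pull_out_length[OF r] by fastforce
  qed
  then show ?case using Cons.prems by fastforce
qed simp

end

definition left_descent :: "'a set \<Rightarrow> ('a \<Rightarrow> 'a \<Rightarrow> bool) \<Rightarrow> 'a \<Rightarrow> 'a list \<Rightarrow> bool" where
  "left_descent S C s w \<longleftrightarrow> len S C (s # w) < len S C w"

lemma left_descent_eqW: "eqW S C w w' \<Longrightarrow> left_descent S C s w \<longleftrightarrow> left_descent S C s w'"
  unfolding left_descent_def using len_eqW eqW_Cons by metis

lemma left_descent_len_additive:
  assumes "left_descent S C r u" and "len_additive S C u A v"
  shows "left_descent S C r (u @ A @ v)"
proof -
  have "len S C (r # u @ A @ v) \<le> len S C (r # u) + len S C (A @ v)"
    using len_append_le[of S C "r # u" "A @ v"] by simp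
  also have "\<dots> \<le> len S C (r # u) + len S C A + len S C v" using len_append_le[of S C A v] by simp
  also have "\<dots> < len S C u + len S C A + len S C v" using assms(1) unfolding left_descent_def by simp
  finally show ?thesis using assms(2) unfolding left_descent_def len_additive_def by simp
qed

context right_angled_coxeter
begin

lemma len_Cons_reduced: "reduced C W \<Longrightarrow> s \<in> S \<Longrightarrow> len S C (s # W) = length (lmult C s W)"
  using len_eqW[OF lmult_eqW] len_reduced[OF reduced_lmult] by metis

lemma left_descent_iff_pull_out:
  "reduced C W \<Longrightarrow> s \<in> S \<Longrightarrow> eqW S C W w \<Longrightarrow> left_descent S C s w \<longleftrightarrow> pull_out C s W \<noteq> None"
  using left_descent_eqW[of S C W w s] len_Cons_reduced[of W s] len_reduced[of W]
    pull_out_length[of C s W]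
  by (auto simp: left_descent_def length_lmult split: if_splits)

lemma len_Cons_cases:
  assumes "set w \<subseteq> S" and "s \<in> S"
  shows "left_descent S C s w \<and> Suc (len S C (s # w)) = len S C w \<or>
    \<not> left_descent S C s w \<and> len S C (s # w) = Suc (len S C w)"
proof -
  let ?W = "reduce C w"
  have W: "reduced C ?W" "eqW S C ?W w" "length ?W = len S C w"
    using reduced_reduce eqW_reduce len_eq_length_reduce assms by auto
  have "len S C (s # w) = length (lmult C s ?W)"
    using len_eqW[OF eqW_Cons[OF W(2)]] len_Cons_reduced[OF W(1) assms(2)] by simp
  then show ?thesis
    using left_descent_iff_pull_out[OF W(1) assms(2) W(2)] W(3) pull_out_length[of C s ?W]
    by (auto simp: length_lmult split: if_splits)
qed

lemma len_Cons_nondescent: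
  "set w \<subseteq> S \<Longrightarrow> s \<in> S \<Longrightarrow> \<not> left_descent S C s w \<Longrightarrow> len S C (s # w) = Suc (len S C w)"
  using len_Cons_cases by blast

lemma len_Cons_descent:
  "set w \<subseteq> S \<Longrightarrow> s \<in> S \<Longrightarrow> left_descent S C s w \<Longrightarrow> Suc (len S C (s # w)) = len S C w"
  using len_Cons_cases by blast

lemma reduced_word_with_descent:
  assumes "set w \<subseteq> S" and s: "s \<in> S" and "left_descent S C s w"
  obtains W' where "reduced C (s # W')" "set W' \<subseteq> S" "eqW S C w (s # W')"
proof -
  let ?W = "reduce C w"
  have W: "reduced C ?W" "set ?W \<subseteq> S" "eqW S C ?W w" "length ?W = len S C w"
    using reduced_reduce set_reduce[of C w] eqW_reduce len_eq_length_reduce assms(1) by auto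
  obtain r where "pull_out C s ?W = Some r"
    using left_descent_iff_pull_out[OF W(1) s W(3)] assms(3) by auto
  then obtain p q where "?W = p @ s # q" "\<forall>x\<in>set p. C x s" "r = p @ q"
    using pull_out_Some_iff by blast
  then have sw: "comm_equiv C (s # r) ?W" using comm_equiv_move_to_front by simp
  then have e: "eqW S C w (s # r)" using W(3) comm_equiv_eqW eqW_sym eqW_trans by metis
  have sr: "set (s # r) \<subseteq> S" using comm_equiv_set[OF sw] W(2) by simp
  moreover have "len S C (s # r) = length (s # r)"
    using comm_equiv_length[OF sw] W(4) len_eqW[OF e] by simp
  ultimately have "reduced C (s # r)" by (rule reduced_if_len_eq_length)
  with sr e show thesis using that by simp
qed

lemma left_descent_Cons_self: "reduced C (s # W) \<Longrightarrow> s \<in> S \<Longrightarrow> left_descent S C s (s # W)"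
  using left_descent_iff_pull_out[of "s # W" s "s # W"] by simp

lemma exists_left_descent: "set w \<subseteq> S \<Longrightarrow> len S C w > 0 \<Longrightarrow> \<exists>s\<in>S. left_descent S C s w"
proof -
  assume w: "set w \<subseteq> S" and "len S C w > 0"
  then obtain s W' where W: "reduce C w = s # W'"
    using len_eq_length_reduce by (cases "reduce C w") auto
  then have "s \<in> S" using set_reduce[of C w] w by auto
  moreover have "left_descent S C s w"
    using left_descent_iff_pull_out[OF reduced_reduce \<open>s \<in> S\<close> eqW_reduce[OF w]] W by simp
  ultimately show ?thesis by blast
qed

lemma eqW_Nil_if_len_0: "set w \<subseteq> S \<Longrightarrow> len S C w = 0 \<Longrightarrow> eqW S C w []"
  using eqW_reduce len_eq_length_reduce eqW_sym by fastforce

lemma eq_if_eqW_Cons_same_tail: "set X \<subseteq> S \<Longrightarrow> eqW S C (p # X) (s # X) \<Longrightarrow> p = s"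
proof -
  assume "set X \<subseteq> S" and "eqW S C (p # X) (s # X)"
  then have "eqW S C [p] [s]" using eqW_cancel_right[of X S C "[p]" "[s]"] by simp
  then have "comm_equiv C (reduce C [p]) (reduce C [s])" by (rule reduce_eqW)
  then have "comm_equiv C [p] [s]" by (simp add: lmult_def)
  then show ?thesis using comm_equiv_mset by fastforce
qed

lemma len_alt: "s \<noteq> t \<Longrightarrow> \<not> C s t \<Longrightarrow> len S C (alt m s t) = m"
  using len_reduced reduced_alt C_sym by (metis length_alt)

lemma reduced_word_with_two_descents:
  assumes w: "set w \<subseteq> S" and s: "s \<in> S" and t: "t \<in> S" and "s \<noteq> t"
    and "left_descent S C s w" and "left_descent S C t w"
  obtains Z where "C s t" "reduced C (s # t # Z)" "set Z \<subseteq> S" "eqW S C w (s # t # Z)"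
proof -
  obtain W' where W: "reduced C (s # W')" "set W' \<subseteq> S" "eqW S C w (s # W')"
    using reduced_word_with_descent[OF w s] assms(5) by blast
  have "pull_out C t (s # W') \<noteq> None"
    using left_descent_iff_pull_out[OF W(1) t eqW_sym[OF W(3)]] assms(6) by blast
  then obtain r where st: "C s t" and "pull_out C t W' = Some r"
    using \<open>s \<noteq> t\<close> by (auto split: if_splits)
  then obtain P Q where PQ: "W' = P @ t # Q" "\<forall>x\<in>set P. C x t" "r = P @ Q"
    using pull_out_Some_iff by blast
  have sw: "comm_equiv C (s # t # r) (s # W')"
    using comm_equiv_Cons[OF comm_equiv_move_to_front[OF PQ(2)]] PQ by simp
  then have e: "eqW S C w (s # t # r)" using W(3) comm_equiv_eqW eqW_sym eqW_trans by metis
  have "set (s # t # r) \<subseteq> S" using comm_equiv_set[OF sw] W(2) s by simp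
  moreover have "len S C (s # t # r) = length (s # t # r)"
    using len_reduced[OF W(1)] len_eqW[OF comm_equiv_eqW[OF sw]] comm_equiv_length[OF sw] by simp
  ultimately have "reduced C (s # t # r)" by (rule reduced_if_len_eq_length)
  then show thesis using that st e \<open>set (s # t # r) \<subseteq> S\<close> by simp
qed

lemma distinct_left_descents_commute:
  "set w \<subseteq> S \<Longrightarrow> s \<in> S \<Longrightarrow> t \<in> S \<Longrightarrow> s \<noteq> t \<Longrightarrow>
   left_descent S C s w \<Longrightarrow> left_descent S C t w \<Longrightarrow> C s t"
  using reduced_word_with_two_descents by blast

lemma left_descent_Cons_commuting:
  assumes "set w \<subseteq> S" and "s \<in> S" and "r \<in> S"
    and "left_descent S C r w" and "C r s" and "\<not> left_descent S C s w"
  shows "left_descent S C r (s # w)"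
proof -
  have "len S C (r # s # w) = len S C (s # r # w)"
    by (rule len_eqW, rule comm_equiv_eqW, rule comm_equiv_Cons_Cons) (rule assms(5))
  also have "\<dots> \<le> Suc (len S C (r # w))" by (rule len_Cons_le)
  also have "\<dots> < Suc (len S C w)" using assms(4) unfolding left_descent_def by simp
  also have "\<dots> = len S C (s # w)" using len_Cons_nondescent[OF assms(1,2,6)] by simp
  finally show ?thesis unfolding left_descent_def .
qed

lemma left_descent_append_commuting:
  assumes "\<forall>a\<in>set A. C a s" and "left_descent S C s v"
    and "len S C (A @ v) = len S C A + len S C v"
  shows "left_descent S C s (A @ v)"
proof -
  have "len S C (s # A @ v) = len S C (A @ s # v)"
    using len_eqW[OF comm_equiv_eqW[OF comm_equiv_move_to_front[OF assms(1)]]] .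
  also have "\<dots> \<le> len S C A + len S C (s # v)" by (rule len_append_le)
  also have "\<dots> < len S C A + len S C v" using assms(2) unfolding left_descent_def by simp
  also have "\<dots> = len S C (A @ v)" using assms(3) by simp
  finally show ?thesis unfolding left_descent_def .
qed

lemma left_descent_append_not_in:
  assumes A: "reduced C A" "set A \<subseteq> S" and v: "set v \<subseteq> S" and s: "s \<in> S" "s \<notin> set A"
    and additive: "len S C (A @ v) = len S C A + len S C v"
    and "left_descent S C s (A @ v)"
  shows "(\<forall>a\<in>set A. C a s) \<and> left_descent S C s v"
proof -
  let ?V = "reduce C v"
  have V: "reduced C ?V" "set ?V \<subseteq> S" "eqW S C ?V v" "length ?V = len S C v"
    using reduced_reduce set_reduce[of C v] eqW_reduce len_eq_length_reduce v by auto
  have e: "eqW S C (A @ ?V) (A @ v)" using eqW_append_left[OF V(3)] .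
  have "len S C (A @ ?V) = length (A @ ?V)"
    using len_eqW[OF e] additive len_reduced[OF A(1)] V(4) by simp
  moreover have "set (A @ ?V) \<subseteq> S" using A(2) V(2) by simp
  ultimately have "reduced C (A @ ?V)" using reduced_if_len_eq_length by blast
  then have "pull_out C s (A @ ?V) \<noteq> None"
    using left_descent_iff_pull_out[OF _ s(1) e] assms(7) by simp
  then have "(\<forall>a\<in>set A. C a s) \<and> pull_out C s ?V \<noteq> None"
    by (rule pull_out_append_not_in) (rule s(2))
  then show ?thesis using left_descent_iff_pull_out[OF V(1) s(1) V(3)] by simp
qed

end

section \<open>Bruhat order\<close>

lemma bruhat_le_len: "bruhat_le S C u w \<Longrightarrow> len S C u \<le> len S C w"
  unfolding bruhat_le_def using len_le list_emb_length by fastforce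

lemma eqW_if_bruhat_le_len_eq: "bruhat_le S C u w \<Longrightarrow> len S C u = len S C w \<Longrightarrow> eqW S C u w"
proof -
  assume "bruhat_le S C u w" "len S C u = len S C w"
  then obtain w' u' where a: "eqW S C w' w" "length w' = len S C w" "subseq u' w'" "eqW S C u' u"
    unfolding bruhat_le_def by blast
  have "len S C u \<le> length u'" using len_le a(4) by blast
  then have "u' = w'"
    using a list_emb_length subseq_same_length \<open>len S C u = len S C w\<close> by (metis le_antisym)
  then show ?thesis using a eqW_sym eqW_trans by metis
qed

lemma bruhat_le_refl: "bruhat_le S C w w"
  unfolding bruhat_le_def using len_witness by blast

lemma bruhat_le_cong:
  "eqW S C u u' \<Longrightarrow> eqW S C w w' \<Longrightarrow> bruhat_le S C u w \<Longrightarrow> bruhat_le S C u' w'"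
  unfolding bruhat_le_def using len_eqW eqW_trans by metis

lemma bruhat_lt_cong:
  "eqW S C u u' \<Longrightarrow> eqW S C w w' \<Longrightarrow> bruhat_lt S C u w \<Longrightarrow> bruhat_lt S C u' w'"
  unfolding bruhat_lt_def using bruhat_le_cong eqW_trans eqW_sym by meson

lemma bruhat_cover_cong:
  "eqW S C u u' \<Longrightarrow> eqW S C w w' \<Longrightarrow> bruhat_cover S C u w \<Longrightarrow> bruhat_cover S C u' w'"
  unfolding bruhat_cover_def using bruhat_lt_cong eqW_refl eqW_sym by meson

lemma bruhat_lt_len: "bruhat_lt S C u w \<Longrightarrow> len S C u < len S C w"
  unfolding bruhat_lt_def using bruhat_le_len eqW_if_bruhat_le_len_eq le_neq_implies_less by blast

lemma bruhat_cover_if_len_Suc: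
  assumes "bruhat_le S C u w" and "len S C w = Suc (len S C u)"
  shows "bruhat_cover S C u w"
proof -
  have "bruhat_lt S C u w" using assms len_eqW unfolding bruhat_lt_def by fastforce
  moreover have "\<not> (bruhat_lt S C u z \<and> bruhat_lt S C z w)" for z
    using bruhat_lt_len[of S C u z] bruhat_lt_len[of S C z w] assms(2) by auto
  ultimately show ?thesis unfolding bruhat_cover_def by blast
qed

context right_angled_coxeter
begin

lemma subseq_comm_step:
  assumes "comm_step C A B" and "subseq U A"
  obtains U' where "subseq U' B" "comm_equiv C U U'"
proof -
  obtain xs ys a b where ab: "C a b" "A = xs @ [a, b] @ ys" "B = xs @ [b, a] @ ys"
    using assms(1) unfolding comm_step_def by blast
  obtain U1 M U3 where U: "U = U1 @ M @ U3" "subseq U1 xs" "subseq M [a, b]" "subseq U3 ys"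
    using assms(2) ab(2) subseq_append_iff by metis
  define M' where "M' = (if M = [a, b] then [b, a] else M)"
  have "M = [] \<or> M = [a] \<or> M = [b] \<or> M = [a, b]"
    using U(3) by (cases M; cases "tl M") (auto split: if_splits)
  then have "subseq M' [b, a]" "comm_equiv C M M'"
    using comm_equiv_Cons_Cons[of C a b "[]"] ab(1) by (auto simp: M'_def)
  then have "subseq (U1 @ M' @ U3) (xs @ [b, a] @ ys)" "comm_equiv C U (U1 @ M' @ U3)"
    using U comm_equiv_append_context by (blast intro: list_emb_append_mono)+
  then have "subseq (U1 @ M' @ U3) B" "comm_equiv C U (U1 @ M' @ U3)"
    using ab(3) by simp_all
  then show thesis by (rule that)
qed

lemma subseq_comm_equiv:
  "comm_equiv C A B \<Longrightarrow> subseq U A \<Longrightarrow> \<exists>U'. subseq U' B \<and> comm_equiv C U U'"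
proof (induction arbitrary: U rule: rtranclp_induct)
  case (step B D)
  then obtain U' where "subseq U' B" "comm_equiv C U U'" by blast
  moreover obtain U'' where "subseq U'' D" "comm_equiv C U' U''"
    using subseq_comm_step step.hyps(2) calculation(1) by blast
  ultimately show ?case by (meson rtranclp_trans)
qed blast

text \<open>The subword property holds for every reduced word of w, not only for the one chosen in
the definition of Bruhat order.\<close>

lemma bruhat_le_iff_subseq:
  assumes W: "reduced C W" "set W \<subseteq> S" "eqW S C W w"
  shows "bruhat_le S C u w \<longleftrightarrow> (\<exists>U. subseq U W \<and> eqW S C U u)"
proof
  assume "bruhat_le S C u w"
  then obtain w' u' where a: "eqW S C w' w" "length w' = len S C w" "subseq u' w'" "eqW S C u' u"
    unfolding bruhat_le_def by blast
  have ww: "eqW S C w' W" using a(1) W(3) eqW_sym eqW_trans by metis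
  then have "set w' \<subseteq> S" using eqW_set_subset W(2) eqW_sym by metis
  moreover have "len S C w' = length w'" using a(2) len_eqW[OF a(1)] by simp
  ultimately have "reduced C w'" by (rule reduced_if_len_eq_length)
  then have "comm_equiv C w' W" using comm_equiv_if_reduced_eqW W(1) ww by blast
  then obtain U where "subseq U W" "comm_equiv C u' U" using subseq_comm_equiv a(3) by blast
  then show "\<exists>U. subseq U W \<and> eqW S C U u"
    using a(4) comm_equiv_eqW eqW_sym eqW_trans by metis
next
  assume "\<exists>U. subseq U W \<and> eqW S C U u"
  moreover have "length W = len S C w" using len_reduced[OF W(1)] len_eqW[OF W(3)] by simp
  ultimately show "bruhat_le S C u w" unfolding bruhat_le_def using W(3) by blast
qed

lemma bruhat_le_subseqI:
  "reduced C W \<Longrightarrow> set W \<subseteq> S \<Longrightarrow> eqW S C W w \<Longrightarrow> subseq U W \<Longrightarrow> eqW S C U u \<Longrightarrow>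
   bruhat_le S C u w"
  using bruhat_le_iff_subseq by blast

lemma bruhat_le_subseqD:
  "reduced C W \<Longrightarrow> set W \<subseteq> S \<Longrightarrow> eqW S C W w \<Longrightarrow> bruhat_le S C u w \<Longrightarrow>
   \<exists>U. subseq U W \<and> eqW S C U u"
  using bruhat_le_iff_subseq by blast

lemma reduced_subseq_exists: "set U \<subseteq> S \<Longrightarrow> \<exists>U'. subseq U' U \<and> eqW S C U' U \<and> reduced C U'"
proof (induction U)
  case Nil
  show ?case by (intro exI[of _ "[]"]) simp
next
  case (Cons x U)
  then obtain V where V: "subseq V U" "eqW S C V U" "reduced C V" by auto
  have x: "x \<in> S" using Cons.prems by simp
  show ?case
  proof (cases "pull_out C x V")
    case None
    then show ?thesis using V eqW_Cons[OF V(2), of x] by (intro exI[of _ "x # V"]) simp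
  next
    case (Some r)
    have "eqW S C r (x # V)" using lmult_eqW[OF x, of V] Some by (simp add: lmult_def)
    then have "eqW S C r (x # U)" using eqW_Cons[OF V(2)] eqW_trans by blast
    moreover have "subseq r (x # U)"
      using pull_out_subseq[OF Some] V(1) by (metis list_emb_Cons subseq_order.order_trans)
    moreover have "reduced C r"
      using Some V(3) reduced_delete by (auto simp: pull_out_Some_iff)
    ultimately show ?thesis by blast
  qed
qed

lemma bruhat_le_reduced_subseqD:
  assumes W: "reduced C W" "set W \<subseteq> S" "eqW S C W w" and "bruhat_le S C u w"
  obtains U where "subseq U W" "eqW S C U u" "reduced C U"
proof -
  obtain U where U: "subseq U W" "eqW S C U u" using bruhat_le_subseqD W assms(4) by blast
  have "set U \<subseteq> S" using subseq_set[OF U(1)] W(2) by blast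
  then obtain U' where "subseq U' U" "eqW S C U' U" "reduced C U'"
    using reduced_subseq_exists by blast
  then show thesis using that U subseq_order.order_trans[of U' U W] eqW_trans[of S C U' U u] by blast
qed

lemma bruhat_le_trans:
  assumes w: "set w \<subseteq> S" and "bruhat_le S C u v" and "bruhat_le S C v w"
  shows "bruhat_le S C u w"
proof -
  have W: "reduced C (reduce C w)" "set (reduce C w) \<subseteq> S" "eqW S C (reduce C w) w"
    using reduced_reduce set_reduce[of C w] eqW_reduce w by auto
  obtain V where V: "subseq V (reduce C w)" "eqW S C V v" "reduced C V"
    using bruhat_le_reduced_subseqD[OF W assms(3)] by blast
  have "set V \<subseteq> S" using subseq_set[OF V(1)] W(2) by blast
  then obtain U where "subseq U V" "eqW S C U u"
    using bruhat_le_subseqD[OF V(3) _ V(2) assms(2)] by blast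
  then show ?thesis
    using bruhat_le_subseqI[OF W] V(1) subseq_order.order_trans by blast
qed

lemma bruhat_le_lifting:
  assumes a: "set a \<subseteq> S" and b: "set b \<subseteq> S" and s: "s \<in> S"
    and le: "bruhat_le S C a b" and "left_descent S C s b" and "\<not> left_descent S C s a"
  shows "bruhat_le S C a (s # b)"
proof -
  obtain B' where B: "reduced C (s # B')" "set B' \<subseteq> S" "eqW S C b (s # B')"
    using reduced_word_with_descent[OF b s assms(5)] by blast
  obtain A where A: "subseq A (s # B')" "eqW S C A a" "reduced C A"
    using bruhat_le_reduced_subseqD[OF B(1) _ eqW_sym[OF B(3)] le] B(2) s by auto
  have "A \<noteq> s # A1" for A1
  proof
    assume A1: "A = s # A1"
    have "left_descent S C s A" using left_descent_Cons_self A(3) A1 s by simp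
    then show False using left_descent_eqW[OF A(2)] assms(6) by blast
  qed
  then have "subseq A B'" using A(1) by (cases A) (auto split: if_splits)
  moreover have "eqW S C B' (s # b)"
    using eqW_Cons_iff_eqW_Cons[OF s] eqW_sym B(3) by blast
  ultimately show ?thesis using bruhat_le_subseqI[OF _ B(2) _ _ A(2)] B(1) by simp
qed

lemma bruhat_le_Cons_nondescent:
  assumes z: "set z \<subseteq> S" and s: "s \<in> S" and "\<not> left_descent S C s z" and "bruhat_le S C u z"
  shows "bruhat_le S C (s # u) (s # z)"
proof -
  let ?Z = "reduce C z"
  have Z: "reduced C ?Z" "set ?Z \<subseteq> S" "eqW S C ?Z z" "length ?Z = len S C z"
    using reduced_reduce set_reduce[of C z] eqW_reduce len_eq_length_reduce z by auto
  have e: "eqW S C (s # ?Z) (s # z)" using eqW_Cons[OF Z(3)] .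
  have "len S C (s # ?Z) = length (s # ?Z)"
    using len_eqW[OF e] len_Cons_nondescent[OF z s assms(3)] Z(4) by simp
  then have "reduced C (s # ?Z)" using reduced_if_len_eq_length[of "s # ?Z"] Z(2) s by simp
  moreover obtain U where U: "subseq U ?Z" "eqW S C U u"
    using bruhat_le_subseqD[OF Z(1-3) assms(4)] by blast
  ultimately show ?thesis
    using bruhat_le_subseqI[OF _ _ e _ eqW_Cons[OF U(2)]] Z(2) s U(1) by simp
qed

lemma eqW_Cons_if_bruhat_le_nondescent:
  assumes x: "set x \<subseteq> S" and y: "set y \<subseteq> S" and s: "s \<in> S"
    and "bruhat_le S C x y" and "len S C y = Suc (len S C x)"
    and "\<not> left_descent S C s x" and dy: "left_descent S C s y"
  shows "eqW S C x (s # y)"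
proof -
  have "bruhat_le S C x (s # y)" using bruhat_le_lifting[OF x y s assms(4) dy assms(6)] .
  moreover have "len S C x = len S C (s # y)" using len_Cons_descent[OF y s dy] assms(5) by simp
  ultimately show ?thesis by (rule eqW_if_bruhat_le_len_eq)
qed

lemma bruhat_chain_step_Cons:
  assumes s: "s \<in> S" and W1: "set W1 \<subseteq> S" "\<not> left_descent S C s W1"
    and U1: "set U1 \<subseteq> S" "\<not> left_descent S C s U1"
    and z1: "set z1 \<subseteq> S" "bruhat_lt S C U1 z1" "bruhat_le S C z1 W1" "len S C z1 = Suc (len S C U1)"
  shows "bruhat_lt S C (s # U1) (s # z1) \<and> bruhat_le S C (s # z1) (s # W1) \<and>
      len S C (s # z1) = Suc (len S C (s # U1)) \<or> eqW S C z1 (s # U1)"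
proof (cases "left_descent S C s z1")
  case False
  have len: "len S C (s # z1) = Suc (len S C (s # U1))"
    using len_Cons_nondescent[OF z1(1) s False] len_Cons_nondescent[OF U1(1) s U1(2)] z1(4) by simp
  then have "\<not> eqW S C (s # U1) (s # z1)" using len_eqW by fastforce
  moreover have "bruhat_le S C (s # U1) (s # z1)" "bruhat_le S C (s # z1) (s # W1)"
    using bruhat_le_Cons_nondescent[OF z1(1) s False] bruhat_le_Cons_nondescent[OF W1(1) s W1(2) z1(3)]
      z1(2) unfolding bruhat_lt_def by blast+
  ultimately show ?thesis using len unfolding bruhat_lt_def by blast
next
  case True
  have "eqW S C U1 (s # z1)"
    using eqW_Cons_if_bruhat_le_nondescent[OF U1(1) z1(1) s _ z1(4) U1(2) True] z1(2)
    unfolding bruhat_lt_def by blast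
  then show ?thesis using eqW_Cons_iff_eqW_Cons[OF s] eqW_sym by blast
qed

lemma bruhat_lt_chain_reduced:
  "reduced C W \<Longrightarrow> set W \<subseteq> S \<Longrightarrow> set u \<subseteq> S \<Longrightarrow> bruhat_lt S C u W \<Longrightarrow>
   \<exists>z. set z \<subseteq> S \<and> bruhat_lt S C u z \<and> bruhat_le S C z W \<and> len S C z = Suc (len S C u)"
proof (induction W arbitrary: u)
  case Nil
  then show ?case using bruhat_lt_len[of S C u "[]"] by simp
next
  case (Cons s W1)
  note u = Cons.prems(3) and lt = Cons.prems(4)
  have s: "s \<in> S" and W1: "set W1 \<subseteq> S" "reduced C W1" using Cons.prems(1,2) by auto
  have W1_nondescent: "\<not> left_descent S C s W1"
    using left_descent_iff_pull_out[OF W1(2) s eqW_refl] Cons.prems(1) by simp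
  have "subseq W1 (s # W1)" by (rule list_emb_Cons) simp
  then have W1_le: "bruhat_le S C W1 (s # W1)"
    using bruhat_le_subseqI[OF Cons.prems(1,2) eqW_refl _ eqW_refl] by blast
  have below_W1: ?case if le: "bruhat_le S C u W1"
  proof (cases "eqW S C u W1")
    case True
    then have "len S C (s # W1) = Suc (len S C u)"
      using len_reduced[OF Cons.prems(1)] len_reduced[OF W1(2)] len_eqW[OF True] by simp
    then show ?thesis using Cons.prems(2) lt bruhat_le_refl by (intro exI[of _ "s # W1"]) simp
  next
    case False
    then have "bruhat_lt S C u W1" using le unfolding bruhat_lt_def by blast
    then obtain z where "set z \<subseteq> S" "bruhat_lt S C u z" "bruhat_le S C z W1"
        "len S C z = Suc (len S C u)"
      using Cons.IH[OF W1(2,1) u] by blast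
    then show ?thesis using bruhat_le_trans[OF Cons.prems(2) _ W1_le] by blast
  qed
  obtain U where U: "subseq U (s # W1)" "eqW S C U u" "reduced C U"
    using bruhat_le_reduced_subseqD[OF Cons.prems(1,2) eqW_refl] lt unfolding bruhat_lt_def by blast
  show ?case
  proof (cases "subseq U W1")
    case True
    then show ?thesis using below_W1 bruhat_le_subseqI[OF W1(2,1) eqW_refl _ U(2)] by blast
  next
    case False
    then obtain U1 where U1: "U = s # U1" "subseq U1 W1"
      using U(1) by (cases U) (auto split: if_splits)
    have U1_S: "set U1 \<subseteq> S" using subseq_set[OF U1(2)] W1(1) by blast
    have U1_nondescent: "\<not> left_descent S C s U1"
      using left_descent_iff_pull_out[of U1 s U1] U(3) U1(1) s by simp
    have "\<not> eqW S C U1 W1"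
    proof
      assume "eqW S C U1 W1"
      then have "eqW S C u (s # W1)" using eqW_Cons U(2) U1(1) eqW_sym eqW_trans by metis
      then show False using lt unfolding bruhat_lt_def by blast
    qed
    then have "bruhat_lt S C U1 W1"
      using bruhat_le_subseqI[OF W1(2,1) eqW_refl U1(2) eqW_refl] unfolding bruhat_lt_def by blast
    then obtain z1 where z1: "set z1 \<subseteq> S" "bruhat_lt S C U1 z1" "bruhat_le S C z1 W1"
        "len S C z1 = Suc (len S C U1)"
      using Cons.IH[OF W1(2,1) U1_S] by blast
    have u_eq: "eqW S C (s # U1) u" using U(2) U1(1) by simp
    from bruhat_chain_step_Cons[OF s W1(1) W1_nondescent U1_S U1_nondescent z1] show ?thesis
    proof
      assume "eqW S C z1 (s # U1)"
      then show ?thesis using below_W1 bruhat_le_cong[OF _ eqW_refl z1(3)] u_eq eqW_trans by blast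
    next
      assume step: "bruhat_lt S C (s # U1) (s # z1) \<and> bruhat_le S C (s # z1) (s # W1) \<and>
          len S C (s # z1) = Suc (len S C (s # U1))"
      then show ?thesis
        using bruhat_lt_cong[OF u_eq eqW_refl] len_eqW[OF u_eq] z1(1) s
        by (intro exI[of _ "s # z1"]) simp
    qed
  qed
qed

lemma bruhat_cover_len:
  assumes "set x \<subseteq> S" and "set y \<subseteq> S" and c: "bruhat_cover S C x y"
  shows "len S C y = Suc (len S C x)"
proof -
  have Y: "reduced C (reduce C y)" "set (reduce C y) \<subseteq> S" "eqW S C (reduce C y) y"
    using reduced_reduce set_reduce[of C y] eqW_reduce assms(2) by auto
  have "bruhat_lt S C x (reduce C y)"
    using c bruhat_lt_cong[OF eqW_refl eqW_sym[OF Y(3)]] unfolding bruhat_cover_def by blast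
  then obtain z where z: "set z \<subseteq> S" "bruhat_lt S C x z" "bruhat_le S C z y" "len S C z = Suc (len S C x)"
    using bruhat_lt_chain_reduced[OF Y(1,2) assms(1)] bruhat_le_cong[OF eqW_refl Y(3)] by blast
  have "eqW S C z y"
    using c z unfolding bruhat_cover_def bruhat_lt_def words_def by blast
  then show ?thesis using z(4) len_eqW by metis
qed

lemma bruhat_cover_remove_at:
  assumes "set x \<subseteq> S" "set y \<subseteq> S" "bruhat_cover S C x y"
    and Y: "reduced C Y" "set Y \<subseteq> S" "eqW S C Y y"
  obtains p where "p < length Y" "reduced C (remove_at p Y)" "eqW S C (remove_at p Y) x"
proof -
  obtain U where U: "subseq U Y" "eqW S C U x" "reduced C U"
    using bruhat_le_reduced_subseqD[OF Y] assms(3) unfolding bruhat_cover_def bruhat_lt_def by metis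
  have "Suc (length U) = length Y"
    using len_reduced[OF U(3)] len_eqW[OF U(2)] len_reduced[OF Y(1)] len_eqW[OF Y(3)]
      bruhat_cover_len[OF assms(1-3)] by simp
  then obtain p where "p < length Y" "U = remove_at p Y"
    using subseq_length_Suc_remove_at[OF U(1)] by blast
  then show thesis using that U by blast
qed

lemma bruhat_cover_Cons_descent:
  assumes x: "set x \<subseteq> S" and y: "set y \<subseteq> S" and s: "s \<in> S" and c: "bruhat_cover S C x y"
    and dx: "left_descent S C s x" and dy: "left_descent S C s y"
  shows "bruhat_cover S C (s # x) (s # y)"
proof -
  obtain Y' where Y: "reduced C (s # Y')" "set Y' \<subseteq> S" "eqW S C y (s # Y')"
    using reduced_word_with_descent[OF y s dy] by blast
  obtain p where p: "p < length (s # Y')" "eqW S C (remove_at p (s # Y')) x"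
    using bruhat_cover_remove_at[OF x y c Y(1) _ eqW_sym[OF Y(3)]] Y(2) s by auto
  have len_y: "len S C y = Suc (len S C x)" using bruhat_cover_len[OF x y c] .
  have "p \<noteq> 0"
  proof
    assume "p = 0"
    then have "eqW S C (s # x) y"
      using p(2) eqW_Cons[of S C Y' x s] Y(3) eqW_sym eqW_trans by (metis remove_at_Cons_0)
    then show False using dx len_eqW len_y unfolding left_descent_def by fastforce
  qed
  then obtain p' where "p = Suc p'" using not0_implies_Suc by blast
  then have "eqW S C (remove_at p' Y') (s # x)"
    using p(2) eqW_Cons_iff_eqW_Cons[OF s] by simp
  moreover have "eqW S C Y' (s # y)" using Y(3) eqW_Cons_iff_eqW_Cons[OF s] eqW_sym by blast
  ultimately have "bruhat_le S C (s # x) (s # y)"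
    using bruhat_le_subseqI[OF _ Y(2) _ subseq_remove_at] Y(1) by simp
  moreover have "len S C (s # y) = Suc (len S C (s # x))"
    using len_Cons_descent[OF x s dx] len_Cons_descent[OF y s dy] len_y by simp
  ultimately show ?thesis by (rule bruhat_cover_if_len_Suc)
qed

lemma eqW_Cons_if_cover_nondescent:
  assumes x: "set x \<subseteq> S" and y: "set y \<subseteq> S" and s: "s \<in> S" and c: "bruhat_cover S C x y"
    and "\<not> left_descent S C s x" and dy: "left_descent S C s y"
  shows "eqW S C x (s # y)"
  using eqW_Cons_if_bruhat_le_nondescent[OF x y s _ bruhat_cover_len[OF x y c] assms(5) dy] c
  unfolding bruhat_cover_def bruhat_lt_def by blast

lemma bruhat_cover_descent_remove_at:
  assumes x: "set x \<subseteq> S" and y: "set y \<subseteq> S" and s: "s \<in> S" and c: "bruhat_cover S C x y"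
    and "left_descent S C s x" and "\<not> left_descent S C s y"
    and Y: "reduced C Y" "set Y \<subseteq> S" "eqW S C Y y"
  obtains p where "p < length Y" "reduced C (remove_at p Y)" "eqW S C (remove_at p Y) x"
    "pull_out C s (remove_at p Y) \<noteq> None" "pull_out C s Y = None"
proof -
  obtain p where p: "p < length Y" "reduced C (remove_at p Y)" "eqW S C (remove_at p Y) x"
    using bruhat_cover_remove_at[OF x y c Y] by blast
  have "pull_out C s (remove_at p Y) \<noteq> None"
    using left_descent_iff_pull_out[OF p(2) s p(3)] assms(5) by blast
  moreover have "pull_out C s Y = None" using left_descent_iff_pull_out[OF Y(1) s Y(3)] assms(6) by blast
  ultimately show thesis using that p by blast
qed

text \<open>Both x1 and x2 arise from a reduced word of y by deleting the unique letter that blocks s.\<close>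

lemma bruhat_cover_common_descent_unique:
  assumes x1: "set x1 \<subseteq> S" and x2: "set x2 \<subseteq> S" and y: "set y \<subseteq> S" and s: "s \<in> S"
    and "bruhat_cover S C x1 y" "bruhat_cover S C x2 y"
    and "left_descent S C s x1" "left_descent S C s x2" "\<not> left_descent S C s y"
  shows "eqW S C x1 x2"
proof -
  have Y: "reduced C (reduce C y)" "set (reduce C y) \<subseteq> S" "eqW S C (reduce C y) y"
    using reduced_reduce set_reduce[of C y] eqW_reduce y by auto
  obtain p where p: "p < length (reduce C y)" "eqW S C (remove_at p (reduce C y)) x1"
      "pull_out C s (remove_at p (reduce C y)) \<noteq> None" "pull_out C s (reduce C y) = None"
    using bruhat_cover_descent_remove_at[OF x1 y s assms(5,7,9) Y] by blast
  obtain q where q: "q < length (reduce C y)" "eqW S C (remove_at q (reduce C y)) x2"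
      "pull_out C s (remove_at q (reduce C y)) \<noteq> None"
    using bruhat_cover_descent_remove_at[OF x2 y s assms(6,8,9) Y] by blast
  have "p = q" using pull_out_remove_at_unique[OF p(4) p(1) p(3) q(1) q(3)] by blast
  then show ?thesis using p(2) q(2) eqW_sym eqW_trans by blast
qed

lemma bruhat_cover_descent_deleted_letter:
  assumes "set x \<subseteq> S" "set y \<subseteq> S" "s \<in> S" "bruhat_cover S C x y"
    and "left_descent S C s x" "\<not> left_descent S C s y"
    and Y: "reduced C Y" "set Y \<subseteq> S" "eqW S C Y y" and X: "reduced C X" "eqW S C X x"
  obtains p where "p < length Y" "mset Y = add_mset (Y ! p) (mset X)" "\<not> C (Y ! p) s"
proof -
  obtain p where p: "p < length Y" "reduced C (remove_at p Y)" "eqW S C (remove_at p Y) x"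
      "pull_out C s (remove_at p Y) \<noteq> None" "pull_out C s Y = None"
    using bruhat_cover_descent_remove_at[OF assms(1-6) Y] by blast
  have "comm_equiv C (remove_at p Y) X"
    using comm_equiv_if_reduced_eqW[OF p(2) X(1)] p(3) X(2) eqW_sym eqW_trans by blast
  then have "mset Y = add_mset (Y ! p) (mset X)" using mset_remove_at[OF p(1)] comm_equiv_mset by simp
  moreover have "\<not> C (Y ! p) s" using pull_out_remove_at_unique[OF p(5) p(1) p(4) p(1) p(4)] by blast
  ultimately show thesis using that p(1) by blast
qed

end

section \<open>Butterflies\<close>

lemma butterfly_swap_lower: "butterfly S C x1 x2 y1 y2 \<Longrightarrow> butterfly S C x2 x1 y1 y2"
  unfolding butterfly_def using eqW_sym by blast

lemma butterfly_swap_upper: "butterfly S C x1 x2 y1 y2 \<Longrightarrow> butterfly S C x1 x2 y2 y1"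
  unfolding butterfly_def using eqW_sym by blast

definition alternating_butterfly :: "'a set \<Rightarrow> ('a \<Rightarrow> 'a \<Rightarrow> bool) \<Rightarrow> nat \<Rightarrow> 'a list \<Rightarrow> 'a list \<Rightarrow>
    'a \<Rightarrow> 'a \<Rightarrow> 'a list \<Rightarrow> 'a list \<Rightarrow> 'a list \<Rightarrow> 'a list \<Rightarrow> bool" where
  "alternating_butterfly S C m u v s s' x1 x2 y1 y2 \<longleftrightarrow>
     m \<ge> 1 \<and> u \<in> words S \<and> v \<in> words S \<and> s \<in> S \<and> s' \<in> S \<and> s \<noteq> s' \<and> \<not> C s s' \<and>
     eqW S C x1 (u @ alt m s s' @ v) \<and> eqW S C x2 (u @ alt m s' s @ v) \<and>
     eqW S C y1 (u @ alt (m+1) s s' @ v) \<and> eqW S C y2 (u @ alt (m+1) s' s @ v) \<and>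
     len_additive S C u (alt m s s') v \<and> len_additive S C u (alt m s' s) v \<and>
     len_additive S C u (alt (m+1) s s') v \<and> len_additive S C u (alt (m+1) s' s) v"

definition butterfly_shape :: "'a set \<Rightarrow> ('a \<Rightarrow> 'a \<Rightarrow> bool) \<Rightarrow>
    'a list \<Rightarrow> 'a list \<Rightarrow> 'a list \<Rightarrow> 'a list \<Rightarrow> bool" where
  "butterfly_shape S C x1 x2 y1 y2 \<longleftrightarrow> (\<exists>m u v s s'.
     alternating_butterfly S C m u v s s' x1 x2 y1 y2 \<or> alternating_butterfly S C m u v s s' x1 x2 y2 y1)"

context right_angled_coxeter
begin

lemma len_additive_Cons_descent:
  assumes w: "set w \<subseteq> S" and r: "r \<in> S" and "left_descent S C r w"
    and e: "eqW S C (r # w) (u @ A @ v)" and additive: "len_additive S C u A v"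
  shows "len_additive S C (r # u) A v"
proof -
  have "eqW S C w (r # u @ A @ v)" using eqW_Cons_iff_eqW_Cons[OF r] e by blast
  then have "len S C (r # u @ A @ v) = Suc (len S C u + len S C A + len S C v)"
    using len_eqW len_eqW[OF e] len_Cons_descent[OF w r assms(3)] additive
    unfolding len_additive_def by metis
  moreover have "len S C ((r # u) @ A @ v) \<le> len S C (r # u) + len S C A + len S C v"
    using len_append_le[of S C "r # u" "A @ v"] len_append_le[of S C A v] by simp
  ultimately show ?thesis
    using len_Cons_le[of S C r u] unfolding len_additive_def by simp
qed

lemma alternating_butterfly_swap:
  "alternating_butterfly S C m u v s s' x1 x2 y1 y2 \<Longrightarrow> alternating_butterfly S C m u v s' s x2 x1 y2 y1"
  unfolding alternating_butterfly_def using C_sym by blast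

lemma butterfly_shape_swap_lower: "butterfly_shape S C x1 x2 y1 y2 \<Longrightarrow> butterfly_shape S C x2 x1 y1 y2"
  unfolding butterfly_shape_def using alternating_butterfly_swap by blast

lemma alternating_butterfly_Cons_descent:
  assumes words: "set x1 \<subseteq> S" "set x2 \<subseteq> S" "set y1 \<subseteq> S" "set y2 \<subseteq> S" and r: "r \<in> S"
    and descents: "left_descent S C r x1" "left_descent S C r x2" "left_descent S C r y1" "left_descent S C r y2"
    and alt: "alternating_butterfly S C m u v s s' (r # x1) (r # x2) (r # y1) (r # y2)"
  shows "alternating_butterfly S C m (r # u) v s s' x1 x2 y1 y2"
proof -
  have additive: "len_additive S C (r # u) A v"
    if "set w \<subseteq> S" "left_descent S C r w" "eqW S C (r # w) (u @ A @ v)" "len_additive S C u A v"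
    for w A
    using len_additive_Cons_descent[OF that(1) r that(2-4)] .
  have eq: "eqW S C w (r # u @ A @ v)" if "eqW S C (r # w) (u @ A @ v)" for w A
    using eqW_Cons_iff_eqW_Cons[OF r] that by blast
  show ?thesis
    using alt additive[OF words(1) descents(1)] additive[OF words(2) descents(2)]
      additive[OF words(3) descents(3)] additive[OF words(4) descents(4)] eq r
    unfolding alternating_butterfly_def words_def by simp
qed

lemma butterfly_shape_Cons_descent:
  assumes "set x1 \<subseteq> S" "set x2 \<subseteq> S" "set y1 \<subseteq> S" "set y2 \<subseteq> S" "r \<in> S"
    and "left_descent S C r x1" "left_descent S C r x2" "left_descent S C r y1" "left_descent S C r y2"
    and "butterfly_shape S C (r # x1) (r # x2) (r # y1) (r # y2)"
  shows "butterfly_shape S C x1 x2 y1 y2"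
  using assms(10) alternating_butterfly_Cons_descent[OF assms(1-9)]
    alternating_butterfly_Cons_descent[OF assms(1,2,4,3,5-7,9,8)]
  unfolding butterfly_shape_def by blast

lemma butterfly_Cons_common_descent:
  assumes words: "set x1 \<subseteq> S" "set x2 \<subseteq> S" "set y1 \<subseteq> S" "set y2 \<subseteq> S"
    and b: "butterfly S C x1 x2 y1 y2" and r: "r \<in> S"
    and d1: "left_descent S C r y1" and d2: "left_descent S C r y2"
  shows "left_descent S C r x1" "left_descent S C r x2"
    "butterfly S C (r # x1) (r # x2) (r # y1) (r # y2)"
proof -
  have ny: "\<not> eqW S C y1 y2" using b unfolding butterfly_def by blast
  have descent: "left_descent S C r x"
    if x: "set x \<subseteq> S" and c1: "bruhat_cover S C x y1" and c2: "bruhat_cover S C x y2" for x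
  proof (rule ccontr)
    assume "\<not> left_descent S C r x"
    then have "eqW S C ([r] @ y1) ([r] @ y2)"
      using eqW_Cons_if_cover_nondescent[OF x words(3) r c1 _ d1]
        eqW_Cons_if_cover_nondescent[OF x words(4) r c2 _ d2] eqW_sym eqW_trans by fastforce
    then show False using ny eqW_cancel_left[of "[r]"] r by simp
  qed
  show dx1: "left_descent S C r x1" and dx2: "left_descent S C r x2"
    using descent[OF words(1)] descent[OF words(2)] b unfolding butterfly_def by blast+
  have ne: "\<not> eqW S C (r # a) (r # a')" if "\<not> eqW S C a a'" for a a'
  proof
    assume "eqW S C (r # a) (r # a')"
    then have "eqW S C a a'" using eqW_cancel_left[of "[r]" S C a a'] r by simp
    with that show False ..
  qed
  show "butterfly S C (r # x1) (r # x2) (r # y1) (r # y2)"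
    using b ne bruhat_cover_Cons_descent[OF words(1) words(3) r _ dx1 d1]
      bruhat_cover_Cons_descent[OF words(1) words(4) r _ dx1 d2]
      bruhat_cover_Cons_descent[OF words(2) words(3) r _ dx2 d1]
      bruhat_cover_Cons_descent[OF words(2) words(4) r _ dx2 d2]
    unfolding butterfly_def by blast
qed

lemma butterfly_descent_cases:
  assumes words: "set x1 \<subseteq> S" "set x2 \<subseteq> S" "set y1 \<subseteq> S" "set y2 \<subseteq> S"
    and b: "butterfly S C x1 x2 y1 y2" and s: "s \<in> S"
    and d1: "left_descent S C s y1" and d2: "\<not> left_descent S C s y2"
  shows "left_descent S C s x1 \<and> \<not> left_descent S C s x2 \<and> eqW S C x2 (s # y1) \<or>
    left_descent S C s x2 \<and> \<not> left_descent S C s x1 \<and> eqW S C x1 (s # y1)"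
proof -
  have nx: "\<not> eqW S C x1 x2"
    and c: "bruhat_cover S C x1 y1" "bruhat_cover S C x1 y2"
      "bruhat_cover S C x2 y1" "bruhat_cover S C x2 y2"
    using b unfolding butterfly_def by blast+
  have "\<not> (left_descent S C s x1 \<and> left_descent S C s x2)"
    using bruhat_cover_common_descent_unique[OF words(1,2,4) s c(2,4) _ _ d2] nx by blast
  moreover have eq: "eqW S C x1 (s # y1)" if "\<not> left_descent S C s x1"
    using eqW_Cons_if_cover_nondescent[OF words(1,3) s c(1) that d1] .
  moreover have "eqW S C x2 (s # y1)" if "\<not> left_descent S C s x2"
    using eqW_Cons_if_cover_nondescent[OF words(2,3) s c(3) that d1] .
  ultimately show ?thesis using nx eqW_sym eqW_trans by blast
qed

text \<open>If x1 has two left descents s and t, then s x1 and t x1 are covered by x2 = s y1 = t y2.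
Deleting the blocking letters from a reduced word of x2 gives t Z and s Z for the same Z, so by
counting letters the letter blocking t is s, which however commutes with t.\<close>

lemma two_descent_covers_absurd:
  assumes words: "set x1 \<subseteq> S" "set x2 \<subseteq> S" "set y1 \<subseteq> S" "set y2 \<subseteq> S"
    and s: "s \<in> S" and t: "t \<in> S" and "s \<noteq> t"
    and c: "bruhat_cover S C x1 y1" "bruhat_cover S C x1 y2"
    and ds: "left_descent S C s x1" "left_descent S C s y1" "\<not> left_descent S C s x2"
    and dt: "left_descent S C t x1" "left_descent S C t y2" "\<not> left_descent S C t x2"
    and e1: "eqW S C x2 (s # y1)" and e2: "eqW S C x2 (t # y2)"
  shows False
proof -
  obtain Z where st: "C s t" and Z: "reduced C (s # t # Z)" "set Z \<subseteq> S" "eqW S C x1 (s # t # Z)"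
    using reduced_word_with_two_descents[OF words(1) s t \<open>s \<noteq> t\<close> ds(1) dt(1)] by blast
  have "eqW S C (t # x1) (t # s # t # Z)" using eqW_Cons[OF Z(3)] .
  also have "eqW S C (t # s # t # Z) (s # t # t # Z)"
    using comm_equiv_eqW[OF comm_equiv_Cons_Cons[of C t s "t # Z"]] C_sym[OF st] by blast
  also have "eqW S C (s # t # t # Z) (s # Z)" using eqW_Cons[OF eqW_Cons_Cons_cancel[OF t]] .
  finally have tx1: "eqW S C (t # x1) (s # Z)" .
  have sx1: "eqW S C (s # x1) (t # Z)" using eqW_Cons_iff_eqW_Cons[OF s] Z(3) by blast
  have red: "reduced C (t # Z)" "reduced C (s # Z)"
    using Z(1) reduced_delete[of "[s]" t Z] st C_sym by auto
  have cover_sZ: "bruhat_cover S C (s # Z) x2"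
    using bruhat_cover_cong[OF tx1 eqW_sym[OF e2] bruhat_cover_Cons_descent[OF words(1,4) t c(2) dt(1,2)]] .
  have cover_tZ: "bruhat_cover S C (t # Z) x2"
    using bruhat_cover_cong[OF sx1 eqW_sym[OF e1] bruhat_cover_Cons_descent[OF words(1,3) s c(1) ds(1,2)]] .
  let ?X = "reduce C x2"
  have X: "reduced C ?X" "set ?X \<subseteq> S" "eqW S C ?X x2"
    using reduced_reduce set_reduce[of C x2] eqW_reduce words(2) by auto
  obtain p where p: "mset ?X = add_mset (?X ! p) (mset (t # Z))" "\<not> C (?X ! p) t"
    using bruhat_cover_descent_deleted_letter[OF _ words(2) t cover_tZ _ dt(3) X red(1) eqW_refl]
      left_descent_Cons_self[OF red(1) t] Z(2) t by auto
  obtain q where q: "mset ?X = add_mset (?X ! q) (mset (s # Z))"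
    using bruhat_cover_descent_deleted_letter[OF _ words(2) s cover_sZ _ ds(3) X red(2) eqW_refl]
      left_descent_Cons_self[OF red(2) s] Z(2) s by auto
  have "count (mset ?X) s = count (add_mset (?X ! p) (mset (t # Z))) s" using p(1) by simp
  then have "?X ! p = s" using q \<open>s \<noteq> t\<close> by (auto split: if_splits)
  then show False using p(2) st by simp
qed

lemma butterfly_second_descent:
  assumes words: "set x1 \<subseteq> S" "set x2 \<subseteq> S" "set y1 \<subseteq> S" "set y2 \<subseteq> S"
    and b: "butterfly S C x1 x2 y1 y2"
    and noc: "\<forall>r\<in>S. \<not> (left_descent S C r y1 \<and> left_descent S C r y2)"
    and s: "s \<in> S" and ds: "left_descent S C s y1" "left_descent S C s x1" "\<not> left_descent S C s x2"
    and e2: "eqW S C x2 (s # y1)"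
  obtains t where "t \<in> S" "s \<noteq> t" "\<not> C s t" "left_descent S C t x2" "\<not> left_descent S C t x1"
    "eqW S C x1 (t # y2)"
proof -
  have c: "bruhat_cover S C x1 y1" "bruhat_cover S C x1 y2"
    using b unfolding butterfly_def by blast+
  obtain t where t: "t \<in> S" "left_descent S C t y2"
    using exists_left_descent[OF words(4)] bruhat_cover_len[OF words(1,4) c(2)] by auto
  have nt: "\<not> left_descent S C t y1" using noc t by blast
  then have "s \<noteq> t" using ds(1) by blast
  have dt: "left_descent S C t x2 \<and> \<not> left_descent S C t x1 \<and> eqW S C x1 (t # y2)"
    using butterfly_descent_cases[OF words(1,2,4,3) butterfly_swap_upper[OF b] t(1) t(2) nt]
      two_descent_covers_absurd[OF words s t(1) \<open>s \<noteq> t\<close> c ds(2,1,3) _ t(2) _ e2] by blast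
  have "\<not> C s t"
  proof
    assume "C s t"
    then have "left_descent S C t (s # x2)"
      using left_descent_Cons_commuting[OF words(2) s t(1)] dt C_sym ds(3) by blast
    then show False
      using left_descent_eqW[OF eqW_Cons_iff_eqW_Cons[OF s, THEN iffD2, OF e2]] nt by blast
  qed
  then show thesis using that t(1) \<open>s \<noteq> t\<close> dt by blast
qed

lemma alternating_butterfly_Nil_prefix:
  assumes alt: "alternating_butterfly S C m u v s s' x1 x2 y1 y2" and "len S C u = 0"
  shows "alternating_butterfly S C m [] v s s' x1 x2 y1 y2"
proof -
  have "eqW S C u []"
    using eqW_Nil_if_len_0 assms(2) alt unfolding alternating_butterfly_def words_def by blast
  then have drop_u: "eqW S C (u @ A @ v) (A @ v)" for A using eqW_append_right by fastforce
  have "eqW S C x (A @ v)" if "eqW S C x (u @ A @ v)" for x A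
    using eqW_trans[OF that drop_u] .
  moreover have "len_additive S C [] A v" if "len_additive S C u A v" for A
    using that len_eqW[OF drop_u] assms(2) unfolding len_additive_def by simp
  ultimately show ?thesis using alt unfolding alternating_butterfly_def words_def by auto
qed

lemma left_descent_alt_swap:
  assumes pq: "p \<in> S" "q \<in> S" "p \<noteq> q" "\<not> C p q" and v: "set v \<subseteq> S" and "k \<ge> 2"
    and s: "s \<in> S" "s \<noteq> p" "s \<noteq> q"
    and additive: "len S C (alt k q p @ v) = k + len S C v" "len S C (alt k p q @ v) = k + len S C v"
    and d: "left_descent S C s (alt k q p @ v)"
  shows "left_descent S C s (alt k p q @ v)"
proof -
  have qp: "q \<noteq> p" "\<not> C q p" using pq C_sym by auto
  have set_qp: "set (alt k q p) = {p, q}" and set_pq: "set (alt k p q) = {p, q}"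
    using set_alt[OF \<open>k \<ge> 2\<close>, of q p] set_alt[OF \<open>k \<ge> 2\<close>, of p q] by auto
  have "(\<forall>a\<in>set (alt k q p). C a s) \<and> left_descent S C s v"
    using left_descent_append_not_in[OF reduced_alt[where m=k, OF qp(2) pq(4) qp(1)] _ v s(1)]
      additive(1) len_alt[OF qp] set_qp pq(1,2) s(2,3) d by simp
  then show ?thesis
    using left_descent_append_commuting[of "alt k p q" s v] additive(2) len_alt[OF pq(3,4)]
      set_qp set_pq by simp
qed

lemma bruhat_cover_Cons_descent_self:
  assumes w: "set w \<subseteq> S" and s: "s \<in> S" and "left_descent S C s w"
  shows "bruhat_cover S C (s # w) w"
proof -
  obtain W' where W: "reduced C (s # W')" "set W' \<subseteq> S" "eqW S C w (s # W')"
    using reduced_word_with_descent[OF w s assms(3)] by blast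
  have "eqW S C W' (s # w)" using eqW_Cons_iff_eqW_Cons[OF s] W(3) eqW_sym by blast
  then have "bruhat_le S C (s # w) w"
    using bruhat_le_subseqI[OF W(1) _ eqW_sym[OF W(3)], of W'] W(2) s by (simp add: list_emb_Cons)
  moreover have "len S C w = Suc (len S C (s # w))" using len_Cons_descent[OF w s assms(3)] by simp
  ultimately show ?thesis by (rule bruhat_cover_if_len_Suc)
qed

end

locale butterfly_split = right_angled_coxeter +
  fixes x1 x2 y1 y2 X1 X2 :: "'a list" and s t :: 'a
  assumes words: "set x1 \<subseteq> S" "set x2 \<subseteq> S" "set y1 \<subseteq> S" "set y2 \<subseteq> S" "set X1 \<subseteq> S" "set X2 \<subseteq> S"
    and butterfly: "butterfly S C x1 x2 y1 y2"
    and no_common_descent: "\<forall>r\<in>S. \<not> (left_descent S C r y1 \<and> left_descent S C r y2)"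
    and letters: "s \<in> S" "t \<in> S" "s \<noteq> t" "\<not> C s t"
    and lower_eq: "eqW S C x1 (s # X1)" "eqW S C x2 (t # X2)"
    and upper_eq: "eqW S C y1 (s # x2)" "eqW S C y2 (t # x1)"
    and descents: "left_descent S C s x1" "left_descent S C t x2"
      "\<not> left_descent S C s x2" "\<not> left_descent S C t x1"
begin

lemma covers: "bruhat_cover S C x1 y1" "bruhat_cover S C x1 y2"
    "bruhat_cover S C x2 y1" "bruhat_cover S C x2 y2"
  using butterfly unfolding butterfly_def by blast+

lemma tails_eq: "eqW S C X1 (s # x1)" "eqW S C X2 (t # x2)"
  using eqW_Cons_iff_eqW_Cons[OF letters(1), THEN iffD1, OF eqW_sym[OF lower_eq(1)]]
    eqW_Cons_iff_eqW_Cons[OF letters(2), THEN iffD1, OF eqW_sym[OF lower_eq(2)]] .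

lemma lengths: "len S C y1 = Suc (len S C x1)" "len S C y2 = Suc (len S C x1)"
    "len S C x2 = len S C x1" "len S C x1 = Suc (len S C X1)" "len S C x2 = Suc (len S C X2)"
proof -
  show y1: "len S C y1 = Suc (len S C x1)" by (rule bruhat_cover_len[OF words(1,3) covers(1)])
  show "len S C y2 = Suc (len S C x1)" by (rule bruhat_cover_len[OF words(1,4) covers(2)])
  show "len S C x2 = len S C x1" using bruhat_cover_len[OF words(2,3) covers(3)] y1 by simp
  show "len S C x1 = Suc (len S C X1)"
    using len_Cons_descent[OF words(1) letters(1) descents(1)] len_eqW[OF tails_eq(1)] by simp
  show "len S C x2 = Suc (len S C X2)"
    using len_Cons_descent[OF words(2) letters(2) descents(2)] len_eqW[OF tails_eq(2)] by simp
qed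

lemma upper_Cons_eq: "eqW S C (s # y1) x2" "eqW S C (t # y2) x1"
  using eqW_Cons_iff_eqW_Cons[OF letters(1), THEN iffD2, OF upper_eq(1)]
    eqW_Cons_iff_eqW_Cons[OF letters(2), THEN iffD2, OF upper_eq(2)] .

lemma upper_descents: "left_descent S C s y1" "left_descent S C t y2"
  using len_eqW[OF upper_Cons_eq(1)] len_eqW[OF upper_Cons_eq(2)] lengths(1-3)
  unfolding left_descent_def by simp_all

lemma tails_butterfly: "\<not> eqW S C X1 X2 \<Longrightarrow> butterfly S C X2 X1 x1 x2"
proof -
  assume "\<not> eqW S C X1 X2"
  moreover have "\<not> eqW S C x1 x2" using butterfly unfolding butterfly_def by blast
  moreover have "bruhat_cover S C X1 x1" "bruhat_cover S C X2 x2"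
    using bruhat_cover_cong[OF eqW_sym[OF tails_eq(1)] eqW_refl
        bruhat_cover_Cons_descent_self[OF words(1) letters(1) descents(1)]]
      bruhat_cover_cong[OF eqW_sym[OF tails_eq(2)] eqW_refl
        bruhat_cover_Cons_descent_self[OF words(2) letters(2) descents(2)]] .
  moreover have "bruhat_cover S C X1 x2" "bruhat_cover S C X2 x1"
    using bruhat_cover_cong[OF eqW_sym[OF tails_eq(1)] upper_Cons_eq(1) bruhat_cover_Cons_descent[OF
        words(1,3) letters(1) covers(1) descents(1) upper_descents(1)]]
      bruhat_cover_cong[OF eqW_sym[OF tails_eq(2)] upper_Cons_eq(2) bruhat_cover_Cons_descent[OF
        words(2,4) letters(2) covers(4) descents(2) upper_descents(2)]] .
  ultimately show ?thesis unfolding butterfly_def using eqW_sym by blast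
qed

lemma alternating_butterfly_base: "eqW S C X1 X2 \<Longrightarrow> alternating_butterfly S C 1 [] X1 s t x1 x2 y1 y2"
proof -
  assume "eqW S C X1 X2"
  then have x2_eq: "eqW S C x2 (t # X1)" using lower_eq(2) eqW_Cons eqW_sym eqW_trans by metis
  have y1_eq: "eqW S C y1 (s # t # X1)" using upper_eq(1) eqW_Cons[OF x2_eq] eqW_trans by blast
  have y2_eq: "eqW S C y2 (t # s # X1)" using upper_eq(2) eqW_Cons[OF lower_eq(1)] eqW_trans by blast
  have "len S C (s # X1) = Suc (len S C X1)" "len S C (t # X1) = Suc (len S C X1)"
      "len S C (s # t # X1) = Suc (Suc (len S C X1))" "len S C (t # s # X1) = Suc (Suc (len S C X1))"
    using len_eqW[OF lower_eq(1)] len_eqW[OF x2_eq] len_eqW[OF y1_eq] len_eqW[OF y2_eq] lengths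
    by simp_all
  moreover have "t \<noteq> s" "\<not> C t s" using letters C_sym by auto
  then have "len S C [s] = 1" "len S C [t] = 1" "len S C [s, t] = 2" "len S C [t, s] = 2"
    using len_reduced[of "[s]"] len_reduced[of "[t]"] len_reduced[of "[s, t]"] len_reduced[of "[t, s]"]
      letters by simp_all
  ultimately show ?thesis
    using letters words(5) lower_eq(1) x2_eq y1_eq y2_eq C_sym[of t s]
    unfolding alternating_butterfly_def len_additive_def words_def
    by (simp add: alt_Suc numeral_2_eq_2)
qed

text \<open>A left descent r of u would be a common left descent of x1 and x2, hence would commute
with s and t and be a common left descent of y1 = s x2 and y2 = t x1.\<close>

lemma prefix_trivial:
  assumes u: "set u \<subseteq> S"
    and "eqW S C x1 (u @ A1 @ v)" "len_additive S C u A1 v"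
    and "eqW S C x2 (u @ A2 @ v)" "len_additive S C u A2 v"
  shows "len S C u = 0"
proof (rule ccontr)
  assume "len S C u \<noteq> 0"
  then obtain r where r: "r \<in> S" "left_descent S C r u" using exists_left_descent[OF u] by blast
  have dr: "left_descent S C r x1" "left_descent S C r x2"
    using left_descent_eqW[OF assms(2)] left_descent_len_additive[OF r(2) assms(3)]
      left_descent_eqW[OF assms(4)] left_descent_len_additive[OF r(2) assms(5)] by simp_all
  have "r \<noteq> s" "r \<noteq> t" using dr(2) descents(3) dr(1) descents(4) by auto
  then have "C r s" "C r t"
    using distinct_left_descents_commute[OF words(1) r(1) letters(1) _ dr(1) descents(1)]
      distinct_left_descents_commute[OF words(2) r(1) letters(2) _ dr(2) descents(2)] by simp_all
  then have "left_descent S C r (s # x2)" "left_descent S C r (t # x1)"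
    using left_descent_Cons_commuting[OF words(2) letters(1) r(1) dr(2) _ descents(3)]
      left_descent_Cons_commuting[OF words(1) letters(2) r(1) dr(1) _ descents(4)] by simp_all
  then have "left_descent S C r y1 \<and> left_descent S C r y2"
    using left_descent_eqW[OF upper_eq(1)] left_descent_eqW[OF upper_eq(2)] by simp
  then show False using no_common_descent r(1) by blast
qed

lemma alternating_butterfly_tails_misoriented:
  assumes "\<not> eqW S C X1 X2" and alt: "alternating_butterfly S C m [] v p q X2 X1 x2 x1"
  shows False
proof -
  have m: "m \<ge> 1" and v: "set v \<subseteq> S" and pq: "p \<in> S" "q \<in> S" "p \<noteq> q" "\<not> C p q"
    and X: "eqW S C X2 (alt m p q @ v)" "eqW S C X1 (alt m q p @ v)"
    and x: "eqW S C x2 (alt (m + 1) p q @ v)" "eqW S C x1 (alt (m + 1) q p @ v)"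
    and add: "len_additive S C [] (alt (m + 1) p q) v" "len_additive S C [] (alt (m + 1) q p) v"
    using alt unfolding alternating_butterfly_def words_def by auto
  have qp: "q \<noteq> p" "\<not> C q p" using pq C_sym by auto
  have x2p: "eqW S C x2 (p # X1)"
    using eqW_trans[OF x(1)[unfolded Suc_eq_plus1[symmetric] alt_Suc append_Cons]
        eqW_Cons[OF eqW_sym[OF X(2)]]] .
  have x1q: "eqW S C x1 (q # X2)"
    using eqW_trans[OF x(2)[unfolded Suc_eq_plus1[symmetric] alt_Suc append_Cons]
        eqW_Cons[OF eqW_sym[OF X(1)]]] .
  have "q \<noteq> s"
  proof
    assume "q = s"
    then have "eqW S C ([s] @ X1) ([s] @ X2)" using x1q lower_eq(1) eqW_sym eqW_trans by fastforce
    then show False using eqW_cancel_left[of "[s]"] letters(1) assms(1) by simp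
  qed
  moreover have "p \<noteq> s"
  proof
    assume "p = s"
    then have "eqW S C x1 x2" using x2p lower_eq(1) eqW_sym eqW_trans by blast
    then show False using butterfly unfolding butterfly_def by blast
  qed
  moreover have "left_descent S C s (alt (m + 1) q p @ v)"
    using descents(1) left_descent_eqW[OF x(2)] by simp
  ultimately have "left_descent S C s (alt (m + 1) p q @ v)"
    using left_descent_alt_swap[OF pq v _ letters(1)] m add len_alt[OF pq(3,4)] len_alt[OF qp]
    unfolding len_additive_def by simp
  then show False using descents(3) left_descent_eqW[OF x(1)] by simp
qed

lemma alternating_butterfly_extend:
  assumes alt: "alternating_butterfly S C m [] v p q X2 X1 x1 x2"
  shows "alternating_butterfly S C (m + 1) [] v s t x1 x2 y1 y2"
proof -
  have v: "set v \<subseteq> S" and pq: "p \<noteq> q" "\<not> C p q"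
    and X: "eqW S C X2 (alt m p q @ v)" "eqW S C X1 (alt m q p @ v)"
    and x: "eqW S C x1 (alt (m + 1) p q @ v)" "eqW S C x2 (alt (m + 1) q p @ v)"
    and add: "len_additive S C [] (alt (m + 1) p q) v" "len_additive S C [] (alt (m + 1) q p) v"
    using alt unfolding alternating_butterfly_def words_def by auto
  have "eqW S C (p # X1) x1"
    using eqW_sym[OF eqW_trans[OF x(1)[unfolded Suc_eq_plus1[symmetric] alt_Suc append_Cons]
        eqW_Cons[OF eqW_sym[OF X(2)]]]] .
  then have p: "p = s" using eq_if_eqW_Cons_same_tail[OF words(5) eqW_trans[OF _ lower_eq(1)]] by blast
  have "eqW S C (q # X2) x2"
    using eqW_sym[OF eqW_trans[OF x(2)[unfolded Suc_eq_plus1[symmetric] alt_Suc append_Cons]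
        eqW_Cons[OF eqW_sym[OF X(1)]]]] .
  then have q: "q = t" using eq_if_eqW_Cons_same_tail[OF words(6) eqW_trans[OF _ lower_eq(2)]] by blast
  have y: "eqW S C y1 (alt (m + 2) s t @ v)" "eqW S C y2 (alt (m + 2) t s @ v)"
    using eqW_trans[OF upper_eq(1) eqW_Cons[OF x(2)]] eqW_trans[OF upper_eq(2) eqW_Cons[OF x(1)]] p q
    by (simp_all add: alt_Suc numeral_2_eq_2)
  have ts: "t \<noteq> s" "\<not> C t s" using letters C_sym by auto
  have "len_additive S C [] (alt (m + 2) s t) v" "len_additive S C [] (alt (m + 2) t s) v"
    using len_eqW[OF y(1)] len_eqW[OF y(2)] lengths(1,2) len_eqW[OF x(1)] add(1) p q
      len_alt[OF letters(3,4)] len_alt[OF ts]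
    unfolding len_additive_def by simp_all
  then show ?thesis
    using alt x y p q unfolding alternating_butterfly_def by (simp add: numeral_2_eq_2)
qed

lemma butterfly_shape_from_tails:
  assumes "\<not> eqW S C X1 X2" and "butterfly_shape S C X2 X1 x1 x2"
  shows "butterfly_shape S C x1 x2 y1 y2"
proof -
  obtain m u v p q where alt: "alternating_butterfly S C m u v p q X2 X1 x1 x2 \<or>
      alternating_butterfly S C m u v p q X2 X1 x2 x1"
    using assms(2) unfolding butterfly_shape_def by blast
  moreover have "len S C u = 0" if "alternating_butterfly S C m u v p q X2 X1 a b"
    and "{a, b} = {x1, x2}" for a b
  proof -
    have "set u \<subseteq> S" "eqW S C a (u @ alt (m + 1) p q @ v)" "eqW S C b (u @ alt (m + 1) q p @ v)"
      "len_additive S C u (alt (m + 1) p q) v" "len_additive S C u (alt (m + 1) q p) v"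
      using that(1) unfolding alternating_butterfly_def words_def by auto
    then show ?thesis using prefix_trivial that(2) by (auto simp: doubleton_eq_iff)
  qed
  ultimately have "len S C u = 0" by blast
  then have "alternating_butterfly S C m [] v p q X2 X1 x1 x2"
    using alt alternating_butterfly_Nil_prefix alternating_butterfly_tails_misoriented[OF assms(1)]
    by blast
  then show ?thesis
    using alternating_butterfly_extend unfolding butterfly_shape_def by blast
qed

end

context right_angled_coxeter
begin

lemma butterfly_shape_no_common_descent:
  assumes IH: "\<And>a1 a2 b1 b2. set a1 \<subseteq> S \<Longrightarrow> set a2 \<subseteq> S \<Longrightarrow> set b1 \<subseteq> S \<Longrightarrow> set b2 \<subseteq> S \<Longrightarrow>
      butterfly S C a1 a2 b1 b2 \<Longrightarrow> len S C b1 < len S C y1 \<Longrightarrow> butterfly_shape S C a1 a2 b1 b2"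
    and words: "set x1 \<subseteq> S" "set x2 \<subseteq> S" "set y1 \<subseteq> S" "set y2 \<subseteq> S"
    and b: "butterfly S C x1 x2 y1 y2"
    and noc: "\<forall>r\<in>S. \<not> (left_descent S C r y1 \<and> left_descent S C r y2)"
    and s: "s \<in> S" and ds: "left_descent S C s y1" "left_descent S C s x1" "\<not> left_descent S C s x2"
    and e2: "eqW S C x2 (s # y1)"
  shows "butterfly_shape S C x1 x2 y1 y2"
proof -
  obtain t where t: "t \<in> S" "s \<noteq> t" "\<not> C s t" "left_descent S C t x2" "\<not> left_descent S C t x1"
      "eqW S C x1 (t # y2)"
    by (rule butterfly_second_descent[OF words b noc s ds e2])
  obtain X1 where X1: "reduced C (s # X1)" "set X1 \<subseteq> S" "eqW S C x1 (s # X1)"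
    by (rule reduced_word_with_descent[OF words(1) s ds(2)])
  obtain X2 where X2: "reduced C (t # X2)" "set X2 \<subseteq> S" "eqW S C x2 (t # X2)"
    by (rule reduced_word_with_descent[OF words(2) t(1,4)])
  have upper: "eqW S C y1 (s # x2)" "eqW S C y2 (t # x1)"
    using eqW_Cons_iff_eqW_Cons[OF s, THEN iffD1, OF eqW_sym[OF e2]]
      eqW_Cons_iff_eqW_Cons[OF t(1), THEN iffD1, OF eqW_sym[OF t(6)]] .
  interpret butterfly_split S C x1 x2 y1 y2 X1 X2 s t
    by unfold_locales (fact words X1(2,3) X2(2,3) b noc s t(1-5) ds(2,3) upper)+
  show ?thesis
  proof (cases "eqW S C X1 X2")
    case True
    then show ?thesis using alternating_butterfly_base unfolding butterfly_shape_def by blast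
  next
    case False
    have "butterfly_shape S C X2 X1 x1 x2"
      using IH[OF words(6,5,1,2) tails_butterfly[OF False]] lengths(1) by simp
    then show ?thesis using butterfly_shape_from_tails[OF False] by blast
  qed
qed

lemma butterfly_shape_if_butterfly:
  "set x1 \<subseteq> S \<Longrightarrow> set x2 \<subseteq> S \<Longrightarrow> set y1 \<subseteq> S \<Longrightarrow> set y2 \<subseteq> S \<Longrightarrow>
   butterfly S C x1 x2 y1 y2 \<Longrightarrow> butterfly_shape S C x1 x2 y1 y2"
proof (induction "len S C y1" arbitrary: x1 x2 y1 y2 rule: less_induct)
  case less
  note words = less.prems(1-4) and b = less.prems(5)
  show ?case
  proof (cases "\<exists>r\<in>S. left_descent S C r y1 \<and> left_descent S C r y2")
    case True
    then obtain r where r: "r \<in> S" "left_descent S C r y1" "left_descent S C r y2" by blast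
    note dx = butterfly_Cons_common_descent[OF words b r]
    have "butterfly_shape S C (r # x1) (r # x2) (r # y1) (r # y2)"
      using less.hyps[OF _ _ _ _ _ dx(3)] words r(1,2) unfolding left_descent_def by simp
    then show ?thesis using butterfly_shape_Cons_descent[OF words r(1) dx(1,2) r(2,3)] by blast
  next
    case False
    have IH: "butterfly_shape S C a1 a2 b1 b2"
      if "set a1 \<subseteq> S" "set a2 \<subseteq> S" "set b1 \<subseteq> S" "set b2 \<subseteq> S" "butterfly S C a1 a2 b1 b2"
        "len S C b1 < len S C y1" for a1 a2 b1 b2
      using less.hyps[OF that(6) that(1-5)] .
    have "bruhat_cover S C x1 y1" using b unfolding butterfly_def by blast
    then obtain s where s: "s \<in> S" "left_descent S C s y1"
      using exists_left_descent[OF words(3)] bruhat_cover_len[OF words(1,3)] by auto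
    then have "\<not> left_descent S C s y2" using False by blast
    from butterfly_descent_cases[OF words b s this] show ?thesis
    proof
      assume "left_descent S C s x1 \<and> \<not> left_descent S C s x2 \<and> eqW S C x2 (s # y1)"
      then show ?thesis using butterfly_shape_no_common_descent[OF IH words b _ s] False by blast
    next
      assume "left_descent S C s x2 \<and> \<not> left_descent S C s x1 \<and> eqW S C x1 (s # y1)"
      then have "butterfly_shape S C x2 x1 y1 y2"
        using butterfly_shape_no_common_descent[OF IH words(2,1,3,4) butterfly_swap_lower[OF b] _ s]
          False by blast
      then show ?thesis by (rule butterfly_shape_swap_lower)
    qed
  qed
qed

end

theorem lemma7p7:
  fixes S :: "'a set" and C :: "'a \<Rightarrow> 'a \<Rightarrow> bool"
    and x1 x2 y1 y2 :: "'a list"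
  assumes "right_angled S C"
    and "x1 \<in> words S" "x2 \<in> words S" "y1 \<in> words S" "y2 \<in> words S"
    and "butterfly S C x1 x2 y1 y2"
  shows "\<exists>m u v s s'. m \<ge> 1 \<and> u \<in> words S \<and> v \<in> words S \<and>
           s \<in> S \<and> s' \<in> S \<and> s \<noteq> s' \<and> \<not> C s s' \<and>
           eqW S C x1 (u @ alt m s s' @ v) \<and> eqW S C x2 (u @ alt m s' s @ v) \<and>
           ((eqW S C y1 (u @ alt (m+1) s s' @ v) \<and> eqW S C y2 (u @ alt (m+1) s' s @ v)) \<or>
            (eqW S C y1 (u @ alt (m+1) s' s @ v) \<and> eqW S C y2 (u @ alt (m+1) s s' @ v))) \<and>
           len_additive S C u (alt m s s') v \<and> len_additive S C u (alt m s' s) v \<and>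
           len_additive S C u (alt (m+1) s s') v \<and> len_additive S C u (alt (m+1) s' s) v"
proof -
  interpret right_angled_coxeter S C by (rule right_angled_coxeter.intro) (rule assms(1))
  have "butterfly_shape S C x1 x2 y1 y2"
    using butterfly_shape_if_butterfly assms(2-6) unfolding words_def by blast
  then show ?thesis unfolding butterfly_shape_def alternating_butterfly_def by blast
qed

end
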